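(* Let $R$ be a ring. Then: \begin{enumerate} \item $\mathbb{L}\mathrm{Ore}_l(R)\subseteq {}'\mathbb{L}_l(R)\subseteq\mathbb{L}^p_l(R)$ and $\mathbb{L}\mathrm{Ore}_l(R)={}'\mathbb{L}_l(R)\cap\mathrm{Ore}_l(R)=\mathbb{L}^p_l(R)\cap\mathrm{Ore}_l(R)$. \item $\mathbb{L}\mathrm{Ore}_r(R)\subseteq \mathbb{L}'_r(R)\subseteq\mathbb{L}^p_r(R)$ and $\mathbb{L}\mathrm{Ore}_r(R)=\mathbb{L}'_r(R)\cap\mathrm{Ore}_r(R)=\mathbb{L}^p_r(R)\cap\mathrm{Ore}_r(R)$. \item $\mathrm{Ore}(R)\subseteq {}'\mathbb{L}'_{l,r}(R)\subseteq\mathbb{L}^p(R)$. \end{enumerate}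
   Context: Rings are associative with $1$. A multiplicative set $S\subseteq R$: $SS\subseteq S$, $1\in S$, $0\notin S$. $R\langle S^{-1}\rangle=R\langle X_S\rangle/I_S$ ($R\langle X_S\rangle$ freely generated by $R$ and noncommuting $x_s$, $s\in S$; $I_S$ generated by $sx_s-1,x_ss-1$); $\mathrm{ass}_R(S)=\ker(R\to R\langle S^{-1}\rangle)$. $S$ is left (resp. right) localizable if $R\langle S^{-1}\rangle\neq0$ and every element is of the form $(x_s+I_S)(r+I_S)$ (resp. $(r+I_S)(x_s+I_S)$), $s\in S,r\in R$; localizable if both; these sets are $\mathbb{L}_l(R),\mathbb{L}_r(R),\mathbb{L}(R)$. For a ring $A$, ${}'\mathcal{C}_A=\{r:xr=0\Rightarrow x=0\}$, $\mathcal{C}'_A=\{r:rx=0\Rightarrow x=0\}$, $\mathcal{C}_A={}'\mathcal{C}_A\cap\mathcal{C}'_A$. For a multiplicative set $S$: $\mathfrak{a}(S)$ (resp. ${}'\mathfrak{a}(S)$, $\mathfrak{a}'(S)$) is the least ideal $\mathfrak{b}$ of $R$ with image of $S$ in $R/\mathfrak{b}$ contained in $\mathcal{C}_{R/\mathfrak{b}}$ (resp. ${}'\mathcal{C}_{R/\mathfrak{b}}$, $\mathcal{C}'_{R/\mathfrak{b}}$). $\mathbb{L}^p_*(R)=\{S\in\mathbb{L}_*(R):\mathrm{ass}_R(S)=\mathfrak{a}(S)\}$ (perfect localizable sets), $*\in\{l,r,\emptyset\}$. $S$ is a left Ore set if $Sr\cap Rs\neq\emptyset$ for all $r\in R,s\in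 S$; right Ore symmetrically; Ore = left and right; $\mathrm{Ore}_l(R),\mathrm{Ore}_r(R),\mathrm{Ore}(R)$ are these sets. ${}'\mathbb{L}_l(R)$ is the set of multiplicative sets $S$ such that the image of $S$ in $R/{}'\mathfrak{a}(S)$ is a left Ore set of $R/{}'\mathfrak{a}(S)$; $\mathbb{L}'_r(R)$ is the set of multiplicative sets $S$ whose image in $R/\mathfrak{a}'(S)$ is a right Ore set; ${}'\mathbb{L}'_{l,r}(R)={}'\mathbb{L}_l(R)\cap\mathbb{L}'_r(R)$; $\mathbb{L}\mathrm{Ore}_*(R)=\mathbb{L}_*(R)\cap\mathrm{Ore}_*(R)$. *)

theory Defs
  imports Main
begin

text \<open>The ring R is the carrier UNIV of a type of class ring_1.
  The ring R<S^-1> = R<X_S>/I_S is presented by generators and relations: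
  terms of the free ring on R and generators x_a, modulo the least
  congruence containing the ring axioms, the relations of R, the relations
  s x_s = 1 = x_s s for s in S, and x_a = 0 for a not in S (so that only
  the generators x_s, s in S, survive).\<close>

datatype 'a rexp = Emb 'a | Xg 'a | Zr | On | Ad "'a rexp" "'a rexp"
  | Ng "'a rexp" | Ml "'a rexp" "'a rexp"

inductive loc_eq :: "'a::ring_1 set \<Rightarrow> 'a rexp \<Rightarrow> 'a rexp \<Rightarrow> bool" for S where
  refl: "loc_eq S t t"
| sym: "loc_eq S t u \<Longrightarrow> loc_eq S u t"
| trans: "loc_eq S t u \<Longrightarrow> loc_eq S u v \<Longrightarrow> loc_eq S t v"
| cong_add: "loc_eq S t t' \<Longrightarrow> loc_eq S u u' \<Longrightarrow> loc_eq S (Ad t u) (Ad t' u')"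
| cong_neg: "loc_eq S t t' \<Longrightarrow> loc_eq S (Ng t) (Ng t')"
| cong_mul: "loc_eq S t t' \<Longrightarrow> loc_eq S u u' \<Longrightarrow> loc_eq S (Ml t u) (Ml t' u')"
| add_assoc: "loc_eq S (Ad (Ad t u) v) (Ad t (Ad u v))"
| add_comm: "loc_eq S (Ad t u) (Ad u t)"
| add_zero: "loc_eq S (Ad Zr t) t"
| add_neg: "loc_eq S (Ad (Ng t) t) Zr"
| mul_assoc: "loc_eq S (Ml (Ml t u) v) (Ml t (Ml u v))"
| mul_one_l: "loc_eq S (Ml On t) t"
| mul_one_r: "loc_eq S (Ml t On) t"
| distr_l: "loc_eq S (Ml t (Ad u v)) (Ad (Ml t u) (Ml t v))"
| distr_r: "loc_eq S (Ml (Ad t u) v) (Ad (Ml t v) (Ml u v))"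
| emb_add: "loc_eq S (Emb (a + b)) (Ad (Emb a) (Emb b))"
| emb_mul: "loc_eq S (Emb (a * b)) (Ml (Emb a) (Emb b))"
| emb_one: "loc_eq S (Emb 1) On"
| inv_r: "s \<in> S \<Longrightarrow> loc_eq S (Ml (Emb s) (Xg s)) On"
| inv_l: "s \<in> S \<Longrightarrow> loc_eq S (Ml (Xg s) (Emb s)) On"
| kill: "a \<notin> S \<Longrightarrow> loc_eq S (Xg a) Zr"

definition mult_set :: "'a::ring_1 set \<Rightarrow> bool" where
  "mult_set S \<longleftrightarrow> 1 \<in> S \<and> (\<forall>a\<in>S. \<forall>b\<in>S. a * b \<in> S) \<and> 0 \<notin> S"

definition ass :: "'a::ring_1 set \<Rightarrow> 'a set" where
  "ass S = {r. loc_eq S (Emb r) Zr}"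

definition left_localizable :: "'a::ring_1 set \<Rightarrow> bool" where
  "left_localizable S \<longleftrightarrow> mult_set S \<and> \<not> loc_eq S On Zr \<and>
     (\<forall>t. \<exists>s\<in>S. \<exists>r. loc_eq S t (Ml (Xg s) (Emb r)))"

definition right_localizable :: "'a::ring_1 set \<Rightarrow> bool" where
  "right_localizable S \<longleftrightarrow> mult_set S \<and> \<not> loc_eq S On Zr \<and>
     (\<forall>t. \<exists>s\<in>S. \<exists>r. loc_eq S t (Ml (Emb r) (Xg s)))"

definition Ll :: "'a::ring_1 set set" where "Ll = {S. left_localizable S}"
definition Lr :: "'a::ring_1 set set" where "Lr = {S. right_localizable S}"
definition L :: "'a::ring_1 set set" where "L = Ll \<inter> Lr"

definition ideal :: "'a::ring_1 set \<Rightarrow> bool" where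
  "ideal I \<longleftrightarrow> 0 \<in> I \<and> (\<forall>x\<in>I. \<forall>y\<in>I. x + y \<in> I) \<and> (\<forall>x\<in>I. - x \<in> I)
     \<and> (\<forall>x\<in>I. \<forall>r. r * x \<in> I \<and> x * r \<in> I)"

text \<open>image of s in R/b lies in 'C_{R/b} (left regular: xs = 0 implies x = 0),
  resp. C'_{R/b} (right regular: sx = 0 implies x = 0)\<close>
definition lreg_mod :: "'a::ring_1 set \<Rightarrow> 'a \<Rightarrow> bool" where
  "lreg_mod b s \<longleftrightarrow> (\<forall>x. x * s \<in> b \<longrightarrow> x \<in> b)"
definition rreg_mod :: "'a::ring_1 set \<Rightarrow> 'a \<Rightarrow> bool" where
  "rreg_mod b s \<longleftrightarrow> (\<forall>x. s * x \<in> b \<longrightarrow> x \<in> b)"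

definition a_ideal :: "'a::ring_1 set \<Rightarrow> 'a set" where
  "a_ideal S = \<Inter>{b. ideal b \<and> (\<forall>s\<in>S. lreg_mod b s \<and> rreg_mod b s)}"
definition la_ideal :: "'a::ring_1 set \<Rightarrow> 'a set" where
  "la_ideal S = \<Inter>{b. ideal b \<and> (\<forall>s\<in>S. lreg_mod b s)}"
definition ra_ideal :: "'a::ring_1 set \<Rightarrow> 'a set" where
  "ra_ideal S = \<Inter>{b. ideal b \<and> (\<forall>s\<in>S. rreg_mod b s)}"

definition Lpl :: "'a::ring_1 set set" where "Lpl = {S\<in>Ll. ass S = a_ideal S}"
definition Lpr :: "'a::ring_1 set set" where "Lpr = {S\<in>Lr. ass S = a_ideal S}"
definition Lp :: "'a::ring_1 set set" where "Lp = {S\<in>L. ass S = a_ideal S}"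

text \<open>Ore sets modulo an ideal b (b = {0} gives Ore sets of R); the image of S
  in R/b must be a multiplicative set, i.e. S is disjoint from b.\<close>
definition left_ore_mod :: "'a::ring_1 set \<Rightarrow> 'a set \<Rightarrow> bool" where
  "left_ore_mod b S \<longleftrightarrow> (\<forall>s\<in>S. s \<notin> b) \<and>
     (\<forall>r. \<forall>s\<in>S. \<exists>s'\<in>S. \<exists>r'. s' * r - r' * s \<in> b)"
definition right_ore_mod :: "'a::ring_1 set \<Rightarrow> 'a set \<Rightarrow> bool" where
  "right_ore_mod b S \<longleftrightarrow> (\<forall>s\<in>S. s \<notin> b) \<and>
     (\<forall>r. \<forall>s\<in>S. \<exists>s'\<in>S. \<exists>r'. r * s' - s * r' \<in> b)"

definition Ore_l :: "'a::ring_1 set set" where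
  "Ore_l = {S. mult_set S \<and> (\<forall>r. \<forall>s\<in>S. \<exists>s'\<in>S. \<exists>r'. s' * r = r' * s)}"
definition Ore_r :: "'a::ring_1 set set" where
  "Ore_r = {S. mult_set S \<and> (\<forall>r. \<forall>s\<in>S. \<exists>s'\<in>S. \<exists>r'. r * s' = s * r')}"
definition Ore :: "'a::ring_1 set set" where "Ore = Ore_l \<inter> Ore_r"

definition lL_l :: "'a::ring_1 set set" where
  "lL_l = {S. mult_set S \<and> left_ore_mod (la_ideal S) S}"
definition rL_r :: "'a::ring_1 set set" where
  "rL_r = {S. mult_set S \<and> right_ore_mod (ra_ideal S) S}"
definition lrL_lr :: "'a::ring_1 set set" where "lrL_lr = lL_l \<inter> rL_r"

definition LOre_l :: "'a::ring_1 set set" where "LOre_l = Ll \<inter> Ore_l"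
definition LOre_r :: "'a::ring_1 set set" where "LOre_r = Lr \<inter> Ore_r"

end

theory Submission
  imports Defs
begin

(* The left statements carry the content; the right ones follow by passing to the
   opposite ring, and part 3 combines both sides.

   Let the image of S in R/'a(S) be left Ore and let T be the set of x with s x in 'a(S)
   for some s in S.  The Ore condition makes T an ideal, modulo which S is regular and
   left Ore, so the left fractions s^-1 x over R/T form a nonzero module on which every
   s in S acts invertibly.  It is therefore a module over R<S^-1>, and evaluating at 1/1
   shows that R<S^-1> is nonzero and ass(S) is contained in T.  As T lies in a(S), which
   lies in ass(S), all three coincide, and the left Ore condition modulo ass(S) puts every
   element of R<S^-1> into the form s^-1 r.  For an Ore set S the ideal of x with x s = 0
   for some s in S contains 'a(S) and misses S, which gives Ore(R) in 'L_l(R). *)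

declare loc_eq.trans [trans]

lemma loc_eq_mul_cong_left: "loc_eq S t t' \<Longrightarrow> loc_eq S (Ml t u) (Ml t' u)"
  and loc_eq_mul_cong_right: "loc_eq S u u' \<Longrightarrow> loc_eq S (Ml t u) (Ml t u')"
  by (simp_all add: loc_eq.cong_mul loc_eq.refl)

lemma loc_eq_add_left_cancel:
  assumes "loc_eq S (Ad a x) (Ad a y)" shows "loc_eq S x y"
proof -
  have "loc_eq S x (Ad (Ng a) (Ad a x))" by (meson loc_eq.intros)
  also have "loc_eq S \<dots> (Ad (Ng a) (Ad a y))" by (intro loc_eq.cong_add loc_eq.refl assms)
  also have "loc_eq S \<dots> y" by (meson loc_eq.intros)
  finally show ?thesis .
qed

lemma loc_eq_idempotent_zero:
  assumes "loc_eq S (Ad z z) z" shows "loc_eq S z Zr"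
  by (rule loc_eq_add_left_cancel[of S z]) (meson assms loc_eq.intros)

lemma loc_eq_mul_zero_right: "loc_eq S (Ml t Zr) Zr"
  by (rule loc_eq_idempotent_zero) (meson loc_eq.intros)

lemma loc_eq_mul_zero_left: "loc_eq S (Ml Zr t) Zr"
  by (rule loc_eq_idempotent_zero) (meson loc_eq.intros)

lemma loc_eq_neg_unique:
  assumes "loc_eq S (Ad a x) Zr" "loc_eq S (Ad a y) Zr" shows "loc_eq S x y"
  by (rule loc_eq_add_left_cancel[of S a]) (meson assms loc_eq.intros)

lemma loc_eq_Ng_zero: "loc_eq S (Ng Zr) Zr"
  by (meson loc_eq.intros)

lemma loc_eq_Emb_zero: "loc_eq S (Emb 0) Zr"
  by (rule loc_eq_idempotent_zero) (metis add_0 loc_eq.emb_add loc_eq.sym)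

lemma loc_eq_Emb_uminus: "loc_eq S (Emb (- a)) (Ng (Emb a))"
proof (rule loc_eq_neg_unique[of S "Emb a"])
  show "loc_eq S (Ad (Emb a) (Emb (- a))) Zr"
    by (metis loc_eq_Emb_zero loc_eq.emb_add loc_eq.sym loc_eq.trans right_minus)
  show "loc_eq S (Ad (Emb a) (Ng (Emb a))) Zr" by (meson loc_eq.intros)
qed

lemma loc_eq_mul_Ng_right: "loc_eq S (Ml t (Ng u)) (Ng (Ml t u))"
proof (rule loc_eq_neg_unique[of S "Ml t u"])
  have "loc_eq S (Ad (Ml t u) (Ml t (Ng u))) (Ml t (Ad u (Ng u)))" by (meson loc_eq.intros)
  also have "loc_eq S \<dots> (Ml t Zr)" by (meson loc_eq.intros)
  also have "loc_eq S \<dots> Zr" by (rule loc_eq_mul_zero_right)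
  finally show "loc_eq S (Ad (Ml t u) (Ml t (Ng u))) Zr" .
  show "loc_eq S (Ad (Ml t u) (Ng (Ml t u))) Zr" by (meson loc_eq.intros)
qed

lemma loc_eq_Emb_mul_Emb: "loc_eq S (Ml (Emb a) (Emb b)) (Emb (a * b))"
  by (meson loc_eq.intros)

lemma loc_eq_mul_Emb_Emb: "loc_eq S (Ml (Ml t (Emb a)) (Emb b)) (Ml t (Emb (a * b)))"
  by (rule loc_eq.trans[OF loc_eq.mul_assoc loc_eq_mul_cong_right[OF loc_eq_Emb_mul_Emb]])

lemma loc_eq_Emb_Xg_cancel_right: "s \<in> S \<Longrightarrow> loc_eq S (Ml (Ml t (Emb s)) (Xg s)) t"
  by (meson loc_eq.intros)

lemma loc_eq_Xg_Emb_cancel_left: "s \<in> S \<Longrightarrow> loc_eq S (Ml (Xg s) (Ml (Emb s) t)) t"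
  by (meson loc_eq.intros)

lemma
  assumes "ideal b"
  shows ideal_zero: "0 \<in> b" and ideal_add: "x \<in> b \<Longrightarrow> y \<in> b \<Longrightarrow> x + y \<in> b"
    and ideal_uminus: "x \<in> b \<Longrightarrow> - x \<in> b"
    and ideal_mult_left: "x \<in> b \<Longrightarrow> r * x \<in> b" and ideal_mult_right: "x \<in> b \<Longrightarrow> x * r \<in> b"
  using assms unfolding ideal_def by auto

lemma ideal_Inter: "(\<And>b. b \<in> B \<Longrightarrow> ideal b) \<Longrightarrow> ideal (\<Inter>B)"
  unfolding ideal_def by blast

lemma ideal_la_ideal: "ideal (la_ideal S)"
  and ideal_a_ideal: "ideal (a_ideal S)"
  unfolding la_ideal_def a_ideal_def by (auto intro: ideal_Inter)

lemma lreg_mod_la_ideal: "s \<in> S \<Longrightarrow> lreg_mod (la_ideal S) s"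
  and lreg_mod_a_ideal: "s \<in> S \<Longrightarrow> lreg_mod (a_ideal S) s"
  and rreg_mod_a_ideal: "s \<in> S \<Longrightarrow> rreg_mod (a_ideal S) s"
  unfolding la_ideal_def a_ideal_def lreg_mod_def rreg_mod_def by blast+

lemma la_ideal_least: "ideal b \<Longrightarrow> (\<And>s. s \<in> S \<Longrightarrow> lreg_mod b s) \<Longrightarrow> la_ideal S \<subseteq> b"
  and a_ideal_least:
    "ideal b \<Longrightarrow> (\<And>s. s \<in> S \<Longrightarrow> lreg_mod b s \<and> rreg_mod b s) \<Longrightarrow> a_ideal S \<subseteq> b"
  unfolding la_ideal_def a_ideal_def by blast+

lemma la_ideal_subset_a_ideal: "la_ideal S \<subseteq> a_ideal S"
  by (rule la_ideal_least[OF ideal_a_ideal lreg_mod_a_ideal])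

lemma ideal_zero_set: "ideal {0}"
  by (simp add: ideal_def)

lemma loc_eq_Emb_eqI: "a - b \<in> ass S \<Longrightarrow> loc_eq S (Emb a) (Emb b)"
proof -
  assume "a - b \<in> ass S"
  then have "loc_eq S (Emb (a - b)) Zr" by (simp add: ass_def)
  then have "loc_eq S (Ad (Emb (a - b)) (Emb b)) (Emb b)" by (meson loc_eq.intros)
  moreover have "loc_eq S (Emb a) (Ad (Emb (a - b)) (Emb b))"
    using loc_eq.emb_add[of S "a - b" b] by simp
  ultimately show ?thesis by (meson loc_eq.trans)
qed

lemma ideal_ass: "ideal (ass S)"
  unfolding ideal_def ass_def
proof (intro conjI ballI allI; simp)
  show "loc_eq S (Emb 0) Zr" by (rule loc_eq_Emb_zero)
  fix x assume x: "loc_eq S (Emb x) Zr"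
  show "loc_eq S (Emb (- x)) Zr"
    by (meson x loc_eq_Emb_uminus loc_eq_Ng_zero loc_eq.intros)
  fix r
  show "loc_eq S (Emb (r * x)) Zr"
    by (meson x loc_eq_mul_zero_right loc_eq.intros)
  show "loc_eq S (Emb (x * r)) Zr"
    by (meson x loc_eq_mul_zero_left loc_eq.intros)
next
  fix x y assume "loc_eq S (Emb x) Zr" "loc_eq S (Emb y) Zr"
  then show "loc_eq S (Emb (x + y)) Zr" by (meson loc_eq.intros)
qed

lemma lreg_mod_ass:
  assumes "s \<in> S" shows "lreg_mod (ass S) s"
  unfolding lreg_mod_def ass_def
proof (intro allI impI, simp)
  fix x assume "loc_eq S (Emb (x * s)) Zr"
  then have "loc_eq S (Ml (Ml (Emb x) (Emb s)) (Xg s)) (Ml Zr (Xg s))"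
    by (meson loc_eq.intros)
  then show "loc_eq S (Emb x) Zr"
    by (meson assms loc_eq_Emb_Xg_cancel_right loc_eq_mul_zero_left loc_eq.sym loc_eq.trans)
qed

lemma rreg_mod_ass:
  assumes "s \<in> S" shows "rreg_mod (ass S) s"
  unfolding rreg_mod_def ass_def
proof (intro allI impI, simp)
  fix x assume "loc_eq S (Emb (s * x)) Zr"
  then have "loc_eq S (Ml (Xg s) (Ml (Emb s) (Emb x))) (Ml (Xg s) Zr)"
    by (meson loc_eq.intros)
  then show "loc_eq S (Emb x) Zr"
    by (meson assms loc_eq_Xg_Emb_cancel_left loc_eq_mul_zero_right loc_eq.sym loc_eq.trans)
qed

lemma not_in_ass:
  assumes "\<not> loc_eq S On Zr" and "s \<in> S" shows "s \<notin> ass S"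
proof
  assume "s \<in> ass S"
  then have "loc_eq S (Ml (Xg s) (Emb s)) (Ml (Xg s) Zr)"
    by (simp add: ass_def loc_eq_mul_cong_right)
  then show False
    by (meson assms loc_eq.inv_l loc_eq_mul_zero_right loc_eq.sym loc_eq.trans)
qed

lemma a_ideal_subset_ass: "a_ideal S \<subseteq> ass S"
  by (rule a_ideal_least[OF ideal_ass]) (simp add: lreg_mod_ass rreg_mod_ass)

section \<open>Left fractions in R<S^-1>\<close>

lemma loc_eq_Xg_one: "1 \<in> S \<Longrightarrow> loc_eq S (Xg 1) On"
  by (meson loc_eq.intros)

lemma loc_eq_Xg_eqI:
  assumes s: "s \<in> S" and T: "T \<in> S" and aT: "loc_eq S (Emb (a * s)) (Emb T)"
  shows "loc_eq S (Xg s) (Ml (Xg T) (Emb a))"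
proof -
  have "loc_eq S (Ml (Xg T) (Emb a)) (Ml (Ml (Ml (Xg T) (Emb a)) (Emb s)) (Xg s))"
    by (rule loc_eq.sym, rule loc_eq_Emb_Xg_cancel_right[OF s])
  also have "loc_eq S \<dots> (Ml (Ml (Xg T) (Ml (Emb a) (Emb s))) (Xg s))"
    by (intro loc_eq_mul_cong_left loc_eq.mul_assoc)
  also have "loc_eq S \<dots> (Ml (Ml (Xg T) (Emb T)) (Xg s))"
    by (intro loc_eq_mul_cong_left loc_eq_mul_cong_right loc_eq.trans[OF loc_eq_Emb_mul_Emb aT])
  also have "loc_eq S \<dots> (Ml On (Xg s))" by (intro loc_eq_mul_cong_left loc_eq.inv_l T)
  also have "loc_eq S \<dots> (Xg s)" by (rule loc_eq.mul_one_l)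
  finally show ?thesis by (rule loc_eq.sym)
qed

lemma loc_eq_Xg_mult:
  assumes s: "s \<in> S" and t: "t \<in> S" and ts: "t * s \<in> S"
  shows "loc_eq S (Ml (Xg s) (Xg t)) (Xg (t * s))"
proof -
  have "loc_eq S (Ml (Xg s) (Xg t)) (Ml (Ml (Xg (t * s)) (Emb t)) (Xg t))"
    by (intro loc_eq_mul_cong_left loc_eq_Xg_eqI[OF s ts loc_eq.refl])
  also have "loc_eq S \<dots> (Xg (t * s))" by (rule loc_eq_Emb_Xg_cancel_right[OF t])
  finally show ?thesis .
qed

lemma loc_eq_Emb_Xg_swap:
  assumes t: "t \<in> S" and s: "s \<in> S" and Ore: "loc_eq S (Emb (t * r)) (Emb (r' * s))"
  shows "loc_eq S (Ml (Emb r) (Xg s)) (Ml (Xg t) (Emb r'))"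
proof -
  have "loc_eq S (Ml (Emb r) (Xg s)) (Ml (Xg t) (Ml (Emb t) (Ml (Emb r) (Xg s))))"
    by (rule loc_eq.sym, rule loc_eq_Xg_Emb_cancel_left[OF t])
  also have "loc_eq S \<dots> (Ml (Xg t) (Ml (Ml (Emb t) (Emb r)) (Xg s)))"
    by (intro loc_eq_mul_cong_right loc_eq.sym[OF loc_eq.mul_assoc])
  also have "loc_eq S \<dots> (Ml (Xg t) (Ml (Ml (Emb r') (Emb s)) (Xg s)))"
    by (intro loc_eq_mul_cong_right loc_eq_mul_cong_left
        loc_eq.trans[OF loc_eq_Emb_mul_Emb loc_eq.trans[OF Ore loc_eq.emb_mul]])
  also have "loc_eq S \<dots> (Ml (Xg t) (Emb r'))"
    by (intro loc_eq_mul_cong_right loc_eq_Emb_Xg_cancel_right s)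
  finally show ?thesis .
qed

definition has_left_fraction :: "'a::ring_1 set \<Rightarrow> 'a rexp \<Rightarrow> bool" where
  "has_left_fraction S t \<longleftrightarrow> (\<exists>s\<in>S. \<exists>r. loc_eq S t (Ml (Xg s) (Emb r)))"

lemma has_left_fraction_loc_eq:
  "loc_eq S t u \<Longrightarrow> has_left_fraction S u \<Longrightarrow> has_left_fraction S t"
  unfolding has_left_fraction_def by (meson loc_eq.trans)

lemma has_left_fraction_Emb:
  assumes "1 \<in> S" shows "has_left_fraction S (Emb r)"
proof -
  have "loc_eq S (Emb r) (Ml (Xg 1) (Emb r))"
    by (meson assms loc_eq_Xg_one loc_eq_mul_cong_left loc_eq.mul_one_l loc_eq.sym loc_eq.trans)
  then show ?thesis using assms unfolding has_left_fraction_def by blast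
qed

lemma has_left_fraction_Xg:
  assumes "1 \<in> S" shows "has_left_fraction S (Xg a)"
proof (cases "a \<in> S")
  case True
  have "loc_eq S (Xg a) (Ml (Xg a) (Emb 1))"
    by (meson loc_eq.emb_one loc_eq.mul_one_r loc_eq_mul_cong_right loc_eq.sym loc_eq.trans)
  then show ?thesis using True unfolding has_left_fraction_def by blast
next
  case False
  then have "loc_eq S (Xg a) (Emb 0)" by (meson loc_eq.kill loc_eq_Emb_zero loc_eq.sym loc_eq.trans)
  then show ?thesis by (rule has_left_fraction_loc_eq[OF _ has_left_fraction_Emb[OF assms]])
qed

lemma has_left_fraction_Ng:
  assumes "has_left_fraction S t" shows "has_left_fraction S (Ng t)"
proof -
  obtain s r where s: "s \<in> S" and t: "loc_eq S t (Ml (Xg s) (Emb r))"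
    using assms unfolding has_left_fraction_def by blast
  have "loc_eq S (Ng t) (Ng (Ml (Xg s) (Emb r)))" by (rule loc_eq.cong_neg[OF t])
  also have "loc_eq S \<dots> (Ml (Xg s) (Emb (- r)))"
    by (meson loc_eq_mul_Ng_right loc_eq_Emb_uminus loc_eq_mul_cong_right loc_eq.sym loc_eq.trans)
  finally show ?thesis using s unfolding has_left_fraction_def by blast
qed

lemma has_left_fraction_Ad:
  assumes S: "mult_set S" and Ore: "\<And>r s. s \<in> S \<Longrightarrow> \<exists>s'\<in>S. \<exists>r'. s' * r - r' * s \<in> ass S"
    and "has_left_fraction S t" and "has_left_fraction S u"
  shows "has_left_fraction S (Ad t u)"
proof -
  obtain s r s' r' where s: "s \<in> S" and t: "loc_eq S t (Ml (Xg s) (Emb r))"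
    and s': "s' \<in> S" and u: "loc_eq S u (Ml (Xg s') (Emb r'))"
    using assms(3,4) unfolding has_left_fraction_def by blast
  obtain a b where a: "a \<in> S" and "a * s - b * s' \<in> ass S" using Ore[OF s'] by blast
  then have ab: "loc_eq S (Emb (a * s)) (Emb (b * s'))" by (simp add: loc_eq_Emb_eqI)
  have as: "a * s \<in> S" using S a s by (simp add: mult_set_def)
  have "loc_eq S t (Ml (Ml (Xg (a * s)) (Emb a)) (Emb r))"
    using t loc_eq_Xg_eqI[OF s as loc_eq.refl] by (meson loc_eq_mul_cong_left loc_eq.trans)
  moreover have "loc_eq S u (Ml (Ml (Xg (a * s)) (Emb b)) (Emb r'))"
    using u loc_eq_Xg_eqI[OF s' as loc_eq.sym[OF ab]] by (meson loc_eq_mul_cong_left loc_eq.trans)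
  ultimately have "loc_eq S (Ad t u) (Ad (Ml (Xg (a * s)) (Emb (a * r))) (Ml (Xg (a * s)) (Emb (b * r'))))"
    by (meson loc_eq.cong_add loc_eq_mul_Emb_Emb loc_eq.trans)
  also have "loc_eq S \<dots> (Ml (Xg (a * s)) (Emb (a * r + b * r')))"
    by (meson loc_eq.distr_l loc_eq.emb_add loc_eq_mul_cong_right loc_eq.sym loc_eq.trans)
  finally show ?thesis using as unfolding has_left_fraction_def by blast
qed

lemma has_left_fraction_Ml:
  assumes S: "mult_set S" and Ore: "\<And>r s. s \<in> S \<Longrightarrow> \<exists>s'\<in>S. \<exists>r'. s' * r - r' * s \<in> ass S"
    and "has_left_fraction S t" and "has_left_fraction S u"
  shows "has_left_fraction S (Ml t u)"
proof -
  obtain s r s' r' where s: "s \<in> S" and t: "loc_eq S t (Ml (Xg s) (Emb r))"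
    and s': "s' \<in> S" and u: "loc_eq S u (Ml (Xg s') (Emb r'))"
    using assms(3,4) unfolding has_left_fraction_def by blast
  obtain a b where a: "a \<in> S" and "a * r - b * s' \<in> ass S" using Ore[OF s'] by blast
  then have ab: "loc_eq S (Emb (a * r)) (Emb (b * s'))" by (simp add: loc_eq_Emb_eqI)
  have as: "a * s \<in> S" using S a s by (simp add: mult_set_def)
  have "loc_eq S (Ml t u) (Ml (Ml (Xg s) (Emb r)) (Ml (Xg s') (Emb r')))"
    by (rule loc_eq.cong_mul[OF t u])
  also have "loc_eq S \<dots> (Ml (Xg s) (Ml (Ml (Emb r) (Xg s')) (Emb r')))"
    by (meson loc_eq.mul_assoc loc_eq_mul_cong_right loc_eq.sym loc_eq.trans)
  also have "loc_eq S \<dots> (Ml (Xg s) (Ml (Ml (Xg a) (Emb b)) (Emb r')))"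
    by (intro loc_eq_mul_cong_right loc_eq_mul_cong_left loc_eq_Emb_Xg_swap[OF a s' ab])
  also have "loc_eq S \<dots> (Ml (Ml (Xg s) (Xg a)) (Emb (b * r')))"
    by (meson loc_eq_mul_Emb_Emb loc_eq.mul_assoc loc_eq_mul_cong_right loc_eq.sym loc_eq.trans)
  also have "loc_eq S \<dots> (Ml (Xg (a * s)) (Emb (b * r')))"
    by (intro loc_eq_mul_cong_left loc_eq_Xg_mult[OF s a as])
  finally show ?thesis using as unfolding has_left_fraction_def by blast
qed

lemma left_ore_has_left_fraction:
  assumes S: "mult_set S" and Ore: "\<And>r s. s \<in> S \<Longrightarrow> \<exists>s'\<in>S. \<exists>r'. s' * r - r' * s \<in> ass S"
  shows "has_left_fraction S t"
proof -
  have one: "1 \<in> S" using S by (simp add: mult_set_def)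
  show ?thesis
  proof (induction t)
    case Zr
    show ?case by (rule has_left_fraction_loc_eq[OF loc_eq.sym[OF loc_eq_Emb_zero] has_left_fraction_Emb[OF one]])
  next
    case On
    show ?case by (rule has_left_fraction_loc_eq[OF loc_eq.sym[OF loc_eq.emb_one] has_left_fraction_Emb[OF one]])
  qed (simp_all add: one has_left_fraction_Emb has_left_fraction_Xg has_left_fraction_Ng
      has_left_fraction_Ad[OF S Ore] has_left_fraction_Ml[OF S Ore])
qed

section \<open>Left Ore localization modulo an ideal\<close>

locale regular_left_ore_mod =
  fixes S :: "'a::ring_1 set" and c :: "'a set"
  assumes ideal: "ideal c" and mult_set: "mult_set S"
    and regular: "s \<in> S \<Longrightarrow> lreg_mod c s \<and> rreg_mod c s"
    and left_ore: "left_ore_mod c S"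
begin

lemma one_in_S: "1 \<in> S" and mult_in_S: "a \<in> S \<Longrightarrow> b \<in> S \<Longrightarrow> a * b \<in> S"
  using mult_set by (auto simp: mult_set_def)

definition cong_mod :: "'a \<Rightarrow> 'a \<Rightarrow> bool" (infix "\<sim>" 50) where
  "x \<sim> y \<longleftrightarrow> x - y \<in> c"

lemma cong_refl [simp]: "x \<sim> x"
  using ideal by (simp add: cong_mod_def ideal_def)

lemma cong_sym: "x \<sim> y \<Longrightarrow> y \<sim> x"
  using ideal unfolding cong_mod_def ideal_def by (metis minus_diff_eq)

lemma cong_trans [trans]: "x \<sim> y \<Longrightarrow> y \<sim> z \<Longrightarrow> x \<sim> z"
proof -
  have "x - z = (x - y) + (y - z)" by simp
  then show "x \<sim> y \<Longrightarrow> y \<sim> z \<Longrightarrow> x \<sim> z"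
    using ideal unfolding cong_mod_def ideal_def by metis
qed

lemma cong_add: "x \<sim> y \<Longrightarrow> x' \<sim> y' \<Longrightarrow> x + x' \<sim> y + y'"
proof -
  have "x + x' - (y + y') = (x - y) + (x' - y')" by simp
  then show "x \<sim> y \<Longrightarrow> x' \<sim> y' \<Longrightarrow> x + x' \<sim> y + y'"
    using ideal unfolding cong_mod_def ideal_def by metis
qed

lemma cong_uminus: "x \<sim> y \<Longrightarrow> - x \<sim> - y"
proof -
  have "- x - - y = - (x - y)" by simp
  then show "x \<sim> y \<Longrightarrow> - x \<sim> - y"
    using ideal unfolding cong_mod_def ideal_def by metis
qed

lemma cong_mult_left: "x \<sim> y \<Longrightarrow> z * x \<sim> z * y"
proof -
  have "z * x - z * y = z * (x - y)" by (simp add: right_diff_distrib)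
  then show "x \<sim> y \<Longrightarrow> z * x \<sim> z * y"
    using ideal unfolding cong_mod_def ideal_def by metis
qed

lemma cong_mult_right: "x \<sim> y \<Longrightarrow> x * z \<sim> y * z"
proof -
  have "x * z - y * z = (x - y) * z" by (simp add: left_diff_distrib)
  then show "x \<sim> y \<Longrightarrow> x * z \<sim> y * z"
    using ideal unfolding cong_mod_def ideal_def by metis
qed

lemma cong_cancel_right: "s \<in> S \<Longrightarrow> x * s \<sim> y * s \<Longrightarrow> x \<sim> y"
  using regular unfolding cong_mod_def lreg_mod_def by (simp add: left_diff_distrib)

lemma cong_zero_cancel_left: "s \<in> S \<Longrightarrow> s * x \<sim> 0 \<Longrightarrow> x \<in> c"
  using regular unfolding cong_mod_def rreg_mod_def by simp

lemma ore_cong: "s \<in> S \<Longrightarrow> \<exists>s'\<in>S. \<exists>r'. s' * r \<sim> r' * s"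
  using left_ore unfolding cong_mod_def left_ore_mod_def by blast

definition ore :: "'a \<Rightarrow> 'a \<Rightarrow> 'a \<times> 'a" where
  "ore r s = (SOME (s', r'). s' \<in> S \<and> s' * r \<sim> r' * s)"

lemma oreE:
  assumes "s \<in> S"
  obtains s' r' where "ore r s = (s', r')" "s' \<in> S" "s' * r \<sim> r' * s"
proof -
  have "\<exists>p. case p of (s', r') \<Rightarrow> s' \<in> S \<and> s' * r \<sim> r' * s"
    using ore_cong[OF assms, of r] by auto
  then have "case ore r s of (s', r') \<Rightarrow> s' \<in> S \<and> s' * r \<sim> r' * s"
    unfolding ore_def by (rule someI_ex)
  then show ?thesis using that by (auto split: prod.splits)
qed

text \<open>A pair (s, x) stands for the fraction s^-1 x of S^-1(R/c).  Equivalence of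
  fractions also demands denominators in S, so it is only a partial equivalence relation.\<close>

definition frac_eq :: "'a \<times> 'a \<Rightarrow> 'a \<times> 'a \<Rightarrow> bool" (infix "\<simeq>" 50) where
  "p \<simeq> q \<longleftrightarrow> fst p \<in> S \<and> fst q \<in> S \<and>
     (\<exists>a a' t. t \<in> S \<and> a * fst p \<sim> t \<and> a' * fst q \<sim> t \<and> a * snd p \<sim> a' * snd q)"

lemma frac_eqI:
  "s \<in> S \<Longrightarrow> s' \<in> S \<Longrightarrow> t \<in> S \<Longrightarrow> a * s \<sim> t \<Longrightarrow> a' * s' \<sim> t \<Longrightarrow> a * x \<sim> a' * x'
    \<Longrightarrow> (s, x) \<simeq> (s', x')"
  unfolding frac_eq_def by auto

lemma frac_eqE:
  assumes "(s, x) \<simeq> (s', x')"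
  obtains a a' t where "s \<in> S" "s' \<in> S" "t \<in> S" "a * s \<sim> t" "a' * s' \<sim> t" "a * x \<sim> a' * x'"
  using assms unfolding frac_eq_def by auto

lemma frac_eq_denominators: "p \<simeq> q \<Longrightarrow> fst p \<in> S \<and> fst q \<in> S"
  unfolding frac_eq_def by blast

lemma frac_eq_refl: "s \<in> S \<Longrightarrow> (s, x) \<simeq> (s, x)"
  by (rule frac_eqI[of s s s 1 1]) simp_all

lemma frac_eq_refl_iff: "p \<simeq> p \<longleftrightarrow> fst p \<in> S"
  using frac_eq_refl frac_eq_denominators by (metis prod.collapse)

lemma frac_eq_sym: "p \<simeq> q \<Longrightarrow> q \<simeq> p"
  unfolding frac_eq_def using cong_sym by blast

lemma frac_eq_trans [trans]:
  assumes pq: "p \<simeq> q" and qr: "q \<simeq> r" shows "p \<simeq> r"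
proof -
  obtain s x s' x' s'' x'' where P: "p = (s, x)" "q = (s', x')" "r = (s'', x'')"
    by (cases p, cases q, cases r) auto
  obtain a a' t where s: "s \<in> S" and s': "s' \<in> S" and t: "t \<in> S"
    and as: "a * s \<sim> t" and as': "a' * s' \<sim> t" and ax: "a * x \<sim> a' * x'"
    using pq P by (auto elim: frac_eqE)
  obtain b b' u where s'': "s'' \<in> S" and u: "u \<in> S"
    and bs': "b * s' \<sim> u" and bs'': "b' * s'' \<sim> u" and bx: "b * x' \<sim> b' * x''"
    using qr P by (auto elim: frac_eqE)
  obtain v w where v: "v \<in> S" and vw: "v * u \<sim> w * t" using ore_cong[OF t] by blast
  have "(w * a') * s' \<sim> (v * b) * s'"
  proof -
    have "(w * a') * s' \<sim> w * t" using cong_mult_left[OF as'] by (simp add: mult.assoc)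
    also have "\<dots> \<sim> v * u" by (rule cong_sym[OF vw])
    also have "\<dots> \<sim> (v * b) * s'" using cong_mult_left[OF cong_sym[OF bs']] by (simp add: mult.assoc)
    finally show ?thesis .
  qed
  then have wa': "w * a' \<sim> v * b" by (rule cong_cancel_right[OF s'])
  show ?thesis unfolding P
  proof (rule frac_eqI[OF s s'' mult_in_S[OF v u]])
    have "(w * a) * s \<sim> w * t" using cong_mult_left[OF as] by (simp add: mult.assoc)
    also have "\<dots> \<sim> v * u" by (rule cong_sym[OF vw])
    finally show "(w * a) * s \<sim> v * u" .
    show "(v * b') * s'' \<sim> v * u" using cong_mult_left[OF bs''] by (simp add: mult.assoc)
    have "(w * a) * x \<sim> (w * a') * x'" using cong_mult_left[OF ax] by (simp add: mult.assoc)
    also have "\<dots> \<sim> (v * b) * x'" by (rule cong_mult_right[OF wa'])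
    also have "\<dots> \<sim> (v * b') * x''" using cong_mult_left[OF bx] by (simp add: mult.assoc)
    finally show "(w * a) * x \<sim> (v * b') * x''" .
  qed
qed

lemma frac_eq_expand: "s \<in> S \<Longrightarrow> t \<in> S \<Longrightarrow> a * s \<sim> t \<Longrightarrow> (s, x) \<simeq> (t, a * x)"
  by (rule frac_eqI[of s t t a 1]) simp_all

lemma frac_eq_numerator: "s \<in> S \<Longrightarrow> x \<sim> x' \<Longrightarrow> (s, x) \<simeq> (s, x')"
  by (rule frac_eqI[of s s s 1 1]) simp_all

fun frac_add :: "'a \<times> 'a \<Rightarrow> 'a \<times> 'a \<Rightarrow> 'a \<times> 'a" (infixl "\<oplus>" 65) where
  "(s, x) \<oplus> (s', x') = (case ore s s' of (a, b) \<Rightarrow> (a * s, a * x + b * x'))"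

text \<open>Left multiplication by r uses an Ore pair t r = r' s, so that r s^-1 = t^-1 r';
  division by s0 uses s0^-1 s^-1 = (s s0)^-1.\<close>

fun frac_act :: "'a \<Rightarrow> 'a \<times> 'a \<Rightarrow> 'a \<times> 'a" where
  "frac_act r (s, x) = (case ore r s of (t, r') \<Rightarrow> (t, r' * x))"

fun frac_div :: "'a \<Rightarrow> 'a \<times> 'a \<Rightarrow> 'a \<times> 'a" where
  "frac_div s\<^sub>0 (s, x) = (s * s\<^sub>0, x)"

fun frac_neg :: "'a \<times> 'a \<Rightarrow> 'a \<times> 'a" where
  "frac_neg (s, x) = (s, - x)"

definition frac_zero :: "'a \<times> 'a" where
  "frac_zero = (1, 0)"

lemma frac_add_eq:
  assumes s: "s \<in> S" and s': "s' \<in> S" and T: "T \<in> S" and as: "a * s \<sim> T" and bs': "b * s' \<sim> T"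
  shows "(s, x) \<oplus> (s', x') \<simeq> (T, a * x + b * x')"
proof -
  obtain t u where ore: "ore s s' = (t, u)" and t: "t \<in> S" and tu: "t * s \<sim> u * s'"
    using oreE[OF s'] .
  obtain v w where v: "v \<in> S" and vw: "v * (t * s) \<sim> w * T"
    using ore_cong[OF T] by blast
  have "(v * t) * s \<sim> (w * a) * s"
  proof -
    have "(v * t) * s \<sim> w * T" using vw by (simp add: mult.assoc)
    also have "\<dots> \<sim> (w * a) * s" using cong_mult_left[OF cong_sym[OF as]] by (simp add: mult.assoc)
    finally show ?thesis .
  qed
  then have vt: "v * t \<sim> w * a" by (rule cong_cancel_right[OF s])
  have "(v * u) * s' \<sim> (w * b) * s'"
  proof -
    have "(v * u) * s' \<sim> v * (t * s)" using cong_mult_left[OF cong_sym[OF tu]] by (simp add: mult.assoc)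
    also have "\<dots> \<sim> w * T" by (rule vw)
    also have "\<dots> \<sim> (w * b) * s'" using cong_mult_left[OF cong_sym[OF bs']] by (simp add: mult.assoc)
    finally show ?thesis .
  qed
  then have vu: "v * u \<sim> w * b" by (rule cong_cancel_right[OF s'])
  show ?thesis unfolding frac_add.simps ore prod.case
  proof (rule frac_eqI[OF mult_in_S[OF t s] T mult_in_S[OF v mult_in_S[OF t s]]])
    show "v * (t * s) \<sim> v * (t * s)" by simp
    show "w * T \<sim> v * (t * s)" by (rule cong_sym[OF vw])
    have "v * (t * x + u * x') = (v * t) * x + (v * u) * x'" by (simp add: algebra_simps)
    also have "\<dots> \<sim> (w * a) * x + (w * b) * x'" by (intro cong_add cong_mult_right vt vu)
    also have "\<dots> = w * (a * x + b * x')" by (simp add: algebra_simps)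
    finally show "v * (t * x + u * x') \<sim> w * (a * x + b * x')" .
  qed
qed

lemma common_denominator:
  assumes s: "s \<in> S" and s': "s' \<in> S"
  obtains T a b where "T \<in> S" "a * s \<sim> T" "b * s' \<sim> T"
proof -
  obtain t u where t: "t \<in> S" and tu: "t * s \<sim> u * s'" using ore_cong[OF s'] by blast
  show ?thesis by (rule that[OF mult_in_S[OF t s] cong_refl cong_sym[OF tu]])
qed

lemma frac_act_eq:
  assumes s: "s \<in> S" and t: "t \<in> S" and tr: "t * r \<sim> r' * s"
  shows "frac_act r (s, x) \<simeq> (t, r' * x)"
proof -
  obtain t\<^sub>1 r\<^sub>1 where ore: "ore r s = (t\<^sub>1, r\<^sub>1)" and t\<^sub>1: "t\<^sub>1 \<in> S" and tr\<^sub>1: "t\<^sub>1 * r \<sim> r\<^sub>1 * s"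
    using oreE[OF s] .
  obtain v w where v: "v \<in> S" and vw: "v * t\<^sub>1 \<sim> w * t" using ore_cong[OF t] by blast
  have "(v * r\<^sub>1) * s \<sim> (w * r') * s"
  proof -
    have "(v * r\<^sub>1) * s \<sim> (v * t\<^sub>1) * r" using cong_mult_left[OF cong_sym[OF tr\<^sub>1]] by (simp add: mult.assoc)
    also have "\<dots> \<sim> (w * t) * r" by (rule cong_mult_right[OF vw])
    also have "\<dots> \<sim> (w * r') * s" using cong_mult_left[OF tr] by (simp add: mult.assoc)
    finally show ?thesis .
  qed
  then have vr: "v * r\<^sub>1 \<sim> w * r'" by (rule cong_cancel_right[OF s])
  show ?thesis unfolding frac_act.simps ore prod.case
  proof (rule frac_eqI[OF t\<^sub>1 t mult_in_S[OF v t\<^sub>1]])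
    show "v * t\<^sub>1 \<sim> v * t\<^sub>1" by simp
    show "w * t \<sim> v * t\<^sub>1" by (rule cong_sym[OF vw])
    show "v * (r\<^sub>1 * x) \<sim> w * (r' * x)" using cong_mult_right[OF vr] by (simp add: mult.assoc)
  qed
qed

lemma frac_add_cong_left:
  assumes "(s, x) \<simeq> (s\<^sub>1, x\<^sub>1)" and s': "s' \<in> S"
  shows "(s, x) \<oplus> (s', x') \<simeq> (s\<^sub>1, x\<^sub>1) \<oplus> (s', x')"
proof -
  obtain a a\<^sub>1 t where s: "s \<in> S" and s\<^sub>1: "s\<^sub>1 \<in> S" and t: "t \<in> S"
    and as: "a * s \<sim> t" and as\<^sub>1: "a\<^sub>1 * s\<^sub>1 \<sim> t" and ax: "a * x \<sim> a\<^sub>1 * x\<^sub>1"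
    using assms(1) by (rule frac_eqE)
  obtain v w where v: "v \<in> S" and vw: "v * t \<sim> w * s'" using ore_cong[OF s'] by blast
  have T: "v * t \<in> S" using mult_in_S[OF v t] .
  have "(s, x) \<oplus> (s', x') \<simeq> (v * t, (v * a) * x + w * x')"
    using cong_mult_left[OF as, of v] cong_sym[OF vw]
    by (intro frac_add_eq[OF s s' T]) (simp_all add: mult.assoc)
  also have "\<dots> \<simeq> (v * t, (v * a\<^sub>1) * x\<^sub>1 + w * x')"
    using cong_mult_left[OF ax, of v]
    by (intro frac_eq_numerator[OF T] cong_add) (simp_all add: mult.assoc)
  also have "\<dots> \<simeq> (s\<^sub>1, x\<^sub>1) \<oplus> (s', x')"
    using cong_mult_left[OF as\<^sub>1, of v] cong_sym[OF vw]
    by (intro frac_eq_sym[OF frac_add_eq[OF s\<^sub>1 s' T]]) (simp_all add: mult.assoc)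
  finally show ?thesis .
qed

lemma frac_add_commute:
  assumes "fst p \<in> S" and "fst q \<in> S" shows "p \<oplus> q \<simeq> q \<oplus> p"
proof -
  obtain s x s' x' where P: "p = (s, x)" "q = (s', x')" by (cases p, cases q)
  with assms have s: "s \<in> S" and s': "s' \<in> S" by auto
  obtain T a b where T: "T \<in> S" and as: "a * s \<sim> T" and bs': "b * s' \<sim> T"
    using common_denominator[OF s s'] .
  have "(s, x) \<oplus> (s', x') \<simeq> (T, b * x' + a * x)"
    using frac_add_eq[OF s s' T as bs', of x x'] by (simp add: add.commute)
  also have "\<dots> \<simeq> (s', x') \<oplus> (s, x)" by (rule frac_eq_sym[OF frac_add_eq[OF s' s T bs' as]])
  finally show ?thesis unfolding P .
qed

lemma frac_add_cong: "p \<simeq> p' \<Longrightarrow> q \<simeq> q' \<Longrightarrow> p \<oplus> q \<simeq> p' \<oplus> q'"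
proof -
  assume pp': "p \<simeq> p'" and qq': "q \<simeq> q'"
  have cong_left: "p \<oplus> q \<simeq> p' \<oplus> q" if "p \<simeq> p'" "fst q \<in> S" for p p' q
    using that frac_add_cong_left by (metis prod.collapse)
  have S: "fst p \<in> S" "fst p' \<in> S" "fst q \<in> S" "fst q' \<in> S"
    using pp' qq' frac_eq_denominators by auto
  have "p \<oplus> q \<simeq> p' \<oplus> q" using pp' S by (rule_tac cong_left) auto
  also have "\<dots> \<simeq> q \<oplus> p'" using S by (rule_tac frac_add_commute) auto
  also have "\<dots> \<simeq> q' \<oplus> p'" using qq' S by (rule_tac cong_left) auto
  also have "\<dots> \<simeq> p' \<oplus> q'" using S by (rule_tac frac_add_commute) auto
  finally show ?thesis .
qed

lemma frac_add_assoc: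
  assumes "fst p \<in> S" and "fst q \<in> S" and "fst r \<in> S" shows "p \<oplus> q \<oplus> r \<simeq> p \<oplus> (q \<oplus> r)"
proof -
  obtain s x s' x' s'' x'' where P: "p = (s, x)" "q = (s', x')" "r = (s'', x'')"
    by (cases p, cases q, cases r)
  with assms have s: "s \<in> S" and s': "s' \<in> S" and s'': "s'' \<in> S" by auto
  obtain T\<^sub>1 a b where T\<^sub>1: "T\<^sub>1 \<in> S" and as: "a * s \<sim> T\<^sub>1" and bs': "b * s' \<sim> T\<^sub>1"
    using common_denominator[OF s s'] .
  obtain v w where v: "v \<in> S" and vw: "v * T\<^sub>1 \<sim> w * s''" using ore_cong[OF s''] by blast
  have T: "v * T\<^sub>1 \<in> S" using mult_in_S[OF v T\<^sub>1] .
  have vas: "(v * a) * s \<sim> v * T\<^sub>1" and vbs': "(v * b) * s' \<sim> v * T\<^sub>1" and ws'': "w * s'' \<sim> v * T\<^sub>1"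
    using cong_mult_left[OF as, of v] cong_mult_left[OF bs', of v] cong_sym[OF vw]
    by (simp_all add: mult.assoc)
  have "(s, x) \<oplus> (s', x') \<oplus> (s'', x'') \<simeq> (T\<^sub>1, a * x + b * x') \<oplus> (s'', x'')"
    by (rule frac_add_cong[OF frac_add_eq[OF s s' T\<^sub>1 as bs'] frac_eq_refl[OF s'']])
  also have "\<dots> \<simeq> (v * T\<^sub>1, v * (a * x + b * x') + w * x'')"
    by (rule frac_add_eq[OF T\<^sub>1 s'' T cong_refl ws''])
  also have "\<dots> = (v * T\<^sub>1, (v * a) * x + 1 * ((v * b) * x' + w * x''))"
    by (simp add: algebra_simps)
  also have "\<dots> \<simeq> (s, x) \<oplus> (v * T\<^sub>1, (v * b) * x' + w * x'')"
    by (rule frac_eq_sym[OF frac_add_eq[OF s T T vas]]) simp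
  also have "\<dots> \<simeq> (s, x) \<oplus> ((s', x') \<oplus> (s'', x''))"
    by (rule frac_add_cong[OF frac_eq_refl[OF s] frac_eq_sym[OF frac_add_eq[OF s' s'' T vbs' ws'']]])
  finally show ?thesis unfolding P .
qed

lemma frac_zero_add: "fst p \<in> S \<Longrightarrow> frac_zero \<oplus> p \<simeq> p"
  using frac_add_eq[OF one_in_S _ _, of "fst p" "fst p" "fst p" 1 0 "snd p"]
  by (simp add: frac_zero_def)

lemma frac_neg_add: "fst p \<in> S \<Longrightarrow> frac_neg p \<oplus> p \<simeq> frac_zero"
proof (cases p)
  fix s x assume P: "p = (s, x)" and "fst p \<in> S"
  then have s: "s \<in> S" by simp
  have "frac_neg (s, x) \<oplus> (s, x) \<simeq> (s, 1 * - x + 1 * x)"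
    unfolding frac_neg.simps by (rule frac_add_eq[OF s s s]) simp_all
  also have "\<dots> \<simeq> frac_zero"
    unfolding frac_zero_def by (rule frac_eqI[OF s one_in_S s, of 1 s]) simp_all
  finally show ?thesis unfolding P .
qed

lemma frac_neg_cong: "p \<simeq> q \<Longrightarrow> frac_neg p \<simeq> frac_neg q"
  by (cases p, cases q) (auto simp: frac_eq_def intro: cong_uminus)

lemma frac_neg_distrib: "frac_neg (p \<oplus> q) = frac_neg p \<oplus> frac_neg q"
  by (cases p, cases q) (simp add: algebra_simps split: prod.split)

lemma frac_act_cong:
  assumes "p \<simeq> p'" shows "frac_act r p \<simeq> frac_act r p'"
proof -
  obtain s x s\<^sub>1 x\<^sub>1 where P: "p = (s, x)" "p' = (s\<^sub>1, x\<^sub>1)" by (cases p, cases p')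
  obtain a a\<^sub>1 t where s: "s \<in> S" and s\<^sub>1: "s\<^sub>1 \<in> S" and t: "t \<in> S"
    and as: "a * s \<sim> t" and as\<^sub>1: "a\<^sub>1 * s\<^sub>1 \<sim> t" and ax: "a * x \<sim> a\<^sub>1 * x\<^sub>1"
    using assms unfolding P by (rule frac_eqE)
  obtain u r' where u: "u \<in> S" and ur: "u * r \<sim> r' * t" using ore_cong[OF t] by blast
  have "frac_act r (s, x) \<simeq> (u, (r' * a) * x)"
    using cong_trans[OF ur cong_mult_left[OF cong_sym[OF as]]]
    by (intro frac_act_eq[OF s u]) (simp add: mult.assoc)
  also have "\<dots> \<simeq> (u, (r' * a\<^sub>1) * x\<^sub>1)"
    using cong_mult_left[OF ax, of r'] by (intro frac_eq_numerator[OF u]) (simp add: mult.assoc)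
  also have "\<dots> \<simeq> frac_act r (s\<^sub>1, x\<^sub>1)"
    using cong_trans[OF ur cong_mult_left[OF cong_sym[OF as\<^sub>1]]]
    by (intro frac_eq_sym[OF frac_act_eq[OF s\<^sub>1 u]]) (simp add: mult.assoc)
  finally show ?thesis unfolding P .
qed

lemma frac_act_additive:
  assumes "fst p \<in> S" and "fst q \<in> S" shows "frac_act r (p \<oplus> q) \<simeq> frac_act r p \<oplus> frac_act r q"
proof -
  obtain s x s' x' where P: "p = (s, x)" "q = (s', x')" by (cases p, cases q)
  with assms have s: "s \<in> S" and s': "s' \<in> S" by auto
  obtain T a b where T: "T \<in> S" and as: "a * s \<sim> T" and bs': "b * s' \<sim> T"
    using common_denominator[OF s s'] .
  obtain t r' where t: "t \<in> S" and tr: "t * r \<sim> r' * T" using ore_cong[OF T] by blast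
  have ras: "t * r \<sim> (r' * a) * s" and rbs': "t * r \<sim> (r' * b) * s'"
    using cong_trans[OF tr cong_mult_left[OF cong_sym[OF as]]]
      cong_trans[OF tr cong_mult_left[OF cong_sym[OF bs']]]
    by (simp_all add: mult.assoc)
  have "frac_act r ((s, x) \<oplus> (s', x')) \<simeq> frac_act r (T, a * x + b * x')"
    by (rule frac_act_cong[OF frac_add_eq[OF s s' T as bs']])
  also have "\<dots> \<simeq> (t, r' * (a * x + b * x'))" by (rule frac_act_eq[OF T t tr])
  also have "\<dots> = (t, 1 * ((r' * a) * x) + 1 * ((r' * b) * x'))" by (simp add: algebra_simps)
  also have "\<dots> \<simeq> (t, (r' * a) * x) \<oplus> (t, (r' * b) * x')"
    by (rule frac_eq_sym[OF frac_add_eq[OF t t t]]) simp_all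
  also have "\<dots> \<simeq> frac_act r (s, x) \<oplus> frac_act r (s', x')"
    by (rule frac_add_cong; rule frac_eq_sym, rule frac_act_eq) (use s s' t ras rbs' in auto)
  finally show ?thesis unfolding P .
qed

lemma frac_act_add:
  assumes "fst p \<in> S" shows "frac_act (r\<^sub>1 + r\<^sub>2) p \<simeq> frac_act r\<^sub>1 p \<oplus> frac_act r\<^sub>2 p"
proof -
  obtain s x where P: "p = (s, x)" by (cases p)
  with assms have s: "s \<in> S" by simp
  obtain t\<^sub>1 r\<^sub>1' where t\<^sub>1: "t\<^sub>1 \<in> S" and o\<^sub>1: "t\<^sub>1 * r\<^sub>1 \<sim> r\<^sub>1' * s" using ore_cong[OF s] by blast
  obtain t\<^sub>2 r\<^sub>2' where t\<^sub>2: "t\<^sub>2 \<in> S" and o\<^sub>2: "t\<^sub>2 * (t\<^sub>1 * r\<^sub>2) \<sim> r\<^sub>2' * s"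
    using ore_cong[OF s] by blast
  have T: "t\<^sub>2 * t\<^sub>1 \<in> S" using mult_in_S[OF t\<^sub>2 t\<^sub>1] .
  have c\<^sub>1: "(t\<^sub>2 * t\<^sub>1) * r\<^sub>1 \<sim> (t\<^sub>2 * r\<^sub>1') * s" and c\<^sub>2: "(t\<^sub>2 * t\<^sub>1) * r\<^sub>2 \<sim> r\<^sub>2' * s"
    using cong_mult_left[OF o\<^sub>1, of t\<^sub>2] o\<^sub>2 by (simp_all add: mult.assoc)
  have "frac_act (r\<^sub>1 + r\<^sub>2) (s, x) \<simeq> (t\<^sub>2 * t\<^sub>1, (t\<^sub>2 * r\<^sub>1' + r\<^sub>2') * x)"
    using cong_add[OF c\<^sub>1 c\<^sub>2] by (intro frac_act_eq[OF s T]) (simp add: algebra_simps)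
  also have "\<dots> = (t\<^sub>2 * t\<^sub>1, 1 * ((t\<^sub>2 * r\<^sub>1') * x) + 1 * (r\<^sub>2' * x))" by (simp add: algebra_simps)
  also have "\<dots> \<simeq> (t\<^sub>2 * t\<^sub>1, (t\<^sub>2 * r\<^sub>1') * x) \<oplus> (t\<^sub>2 * t\<^sub>1, r\<^sub>2' * x)"
    by (rule frac_eq_sym[OF frac_add_eq[OF T T T]]) simp_all
  also have "\<dots> \<simeq> frac_act r\<^sub>1 (s, x) \<oplus> frac_act r\<^sub>2 (s, x)"
    by (rule frac_add_cong; rule frac_eq_sym, rule frac_act_eq[OF s T]) (use c\<^sub>1 c\<^sub>2 in auto)
  finally show ?thesis unfolding P .
qed

lemma frac_act_mult:
  assumes "fst p \<in> S" shows "frac_act (r\<^sub>1 * r\<^sub>2) p \<simeq> frac_act r\<^sub>1 (frac_act r\<^sub>2 p)"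
proof -
  obtain s x where P: "p = (s, x)" by (cases p)
  with assms have s: "s \<in> S" by simp
  obtain t\<^sub>2 r\<^sub>2' where t\<^sub>2: "t\<^sub>2 \<in> S" and o\<^sub>2: "t\<^sub>2 * r\<^sub>2 \<sim> r\<^sub>2' * s" using ore_cong[OF s] by blast
  obtain t\<^sub>1 r\<^sub>1' where t\<^sub>1: "t\<^sub>1 \<in> S" and o\<^sub>1: "t\<^sub>1 * r\<^sub>1 \<sim> r\<^sub>1' * t\<^sub>2" using ore_cong[OF t\<^sub>2] by blast
  have "t\<^sub>1 * (r\<^sub>1 * r\<^sub>2) \<sim> (r\<^sub>1' * t\<^sub>2) * r\<^sub>2"
    using cong_mult_right[OF o\<^sub>1] by (simp add: mult.assoc)
  also have "\<dots> \<sim> (r\<^sub>1' * r\<^sub>2') * s"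
    using cong_mult_left[OF o\<^sub>2, of r\<^sub>1'] by (simp add: mult.assoc)
  finally have o\<^sub>1\<^sub>2: "t\<^sub>1 * (r\<^sub>1 * r\<^sub>2) \<sim> (r\<^sub>1' * r\<^sub>2') * s" .
  have "frac_act (r\<^sub>1 * r\<^sub>2) (s, x) \<simeq> (t\<^sub>1, (r\<^sub>1' * r\<^sub>2') * x)" by (rule frac_act_eq[OF s t\<^sub>1 o\<^sub>1\<^sub>2])
  also have "\<dots> = (t\<^sub>1, r\<^sub>1' * (r\<^sub>2' * x))" by (simp add: mult.assoc)
  also have "\<dots> \<simeq> frac_act r\<^sub>1 (t\<^sub>2, r\<^sub>2' * x)" by (rule frac_eq_sym[OF frac_act_eq[OF t\<^sub>2 t\<^sub>1 o\<^sub>1]])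
  also have "\<dots> \<simeq> frac_act r\<^sub>1 (frac_act r\<^sub>2 (s, x))"
    by (rule frac_act_cong[OF frac_eq_sym[OF frac_act_eq[OF s t\<^sub>2 o\<^sub>2]]])
  finally show ?thesis unfolding P .
qed

lemma frac_act_one: "fst p \<in> S \<Longrightarrow> frac_act 1 p \<simeq> p"
  using frac_act_eq[of "fst p" "fst p" 1 1 "snd p"] by simp

lemma frac_act_div: "s\<^sub>0 \<in> S \<Longrightarrow> fst p \<in> S \<Longrightarrow> frac_act s\<^sub>0 (frac_div s\<^sub>0 p) \<simeq> p"
  using frac_act_eq[of "fst p * s\<^sub>0" "fst p" s\<^sub>0 1 "snd p"] by (cases p) (simp add: mult_in_S)

lemma frac_div_act:
  assumes s\<^sub>0: "s\<^sub>0 \<in> S" and "fst p \<in> S" shows "frac_div s\<^sub>0 (frac_act s\<^sub>0 p) \<simeq> p"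
proof -
  obtain s x where P: "p = (s, x)" by (cases p)
  with assms have s: "s \<in> S" by simp
  obtain t r where ore: "ore s\<^sub>0 s = (t, r)" and t: "t \<in> S" and tr: "t * s\<^sub>0 \<sim> r * s"
    using oreE[OF s] .
  have "(s, x) \<simeq> (t * s\<^sub>0, r * x)"
    by (rule frac_eq_expand[OF s mult_in_S[OF t s\<^sub>0] cong_sym[OF tr]])
  then show ?thesis unfolding P by (simp add: ore frac_eq_sym)
qed

lemma frac_div_cong: "s\<^sub>0 \<in> S \<Longrightarrow> p \<simeq> q \<Longrightarrow> frac_div s\<^sub>0 p \<simeq> frac_div s\<^sub>0 q"
proof (cases p, cases q)
  fix s x s' x' assume s\<^sub>0: "s\<^sub>0 \<in> S" and "p \<simeq> q" and P: "p = (s, x)" "q = (s', x')"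
  then obtain a a' t where "s \<in> S" "s' \<in> S" "t \<in> S" "a * s \<sim> t" "a' * s' \<sim> t" "a * x \<sim> a' * x'"
    by (auto elim: frac_eqE)
  then show "frac_div s\<^sub>0 p \<simeq> frac_div s\<^sub>0 q" unfolding P frac_div.simps
    using s\<^sub>0 by (intro frac_eqI[of _ _ "t * s\<^sub>0" a a']) (auto simp: mult_in_S cong_mult_right mult.assoc[symmetric])
qed

lemma frac_div_additive:
  assumes s\<^sub>0: "s\<^sub>0 \<in> S" and "fst p \<in> S" and "fst q \<in> S"
  shows "frac_div s\<^sub>0 (p \<oplus> q) \<simeq> frac_div s\<^sub>0 p \<oplus> frac_div s\<^sub>0 q"
proof -
  obtain s x s' x' where P: "p = (s, x)" "q = (s', x')" by (cases p, cases q)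
  with assms have s: "s \<in> S" and s': "s' \<in> S" by auto
  obtain t u where ore: "ore s s' = (t, u)" and t: "t \<in> S" and tu: "t * s \<sim> u * s'"
    using oreE[OF s'] .
  have "(t * s * s\<^sub>0, t * x + u * x') \<simeq> (s * s\<^sub>0, x) \<oplus> (s' * s\<^sub>0, x')"
    using cong_mult_right[OF cong_sym[OF tu], of s\<^sub>0] s s' t s\<^sub>0
    by (intro frac_eq_sym[OF frac_add_eq]) (simp_all add: mult_in_S mult.assoc)
  then show ?thesis unfolding P by (simp add: ore)
qed

lemma frac_add_in_S: "fst p \<in> S \<Longrightarrow> fst q \<in> S \<Longrightarrow> fst (p \<oplus> q) \<in> S"
  using frac_add_cong[of p p q q] by (simp add: frac_eq_refl_iff)

lemma frac_add_interchange:
  assumes "fst p \<in> S" "fst q \<in> S" "fst p' \<in> S" "fst q' \<in> S"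
  shows "(p \<oplus> q) \<oplus> (p' \<oplus> q') \<simeq> (p \<oplus> p') \<oplus> (q \<oplus> q')"
proof -
  note S = assms frac_add_in_S
  have "(p \<oplus> q) \<oplus> (p' \<oplus> q') \<simeq> p \<oplus> (q \<oplus> (p' \<oplus> q'))" using S by (intro frac_add_assoc) auto
  also have "\<dots> \<simeq> p \<oplus> ((q \<oplus> p') \<oplus> q')"
    using S by (intro frac_add_cong frac_eq_sym[OF frac_add_assoc]) (auto simp: frac_eq_refl_iff)
  also have "\<dots> \<simeq> p \<oplus> ((p' \<oplus> q) \<oplus> q')"
    using S by (intro frac_add_cong frac_add_commute) (auto simp: frac_eq_refl_iff)
  also have "\<dots> \<simeq> p \<oplus> (p' \<oplus> (q \<oplus> q'))"
    using S by (intro frac_add_cong frac_add_assoc) (auto simp: frac_eq_refl_iff)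
  also have "\<dots> \<simeq> (p \<oplus> p') \<oplus> (q \<oplus> q')" using S by (intro frac_eq_sym[OF frac_add_assoc]) auto
  finally show ?thesis .
qed

definition frac_endo :: "('a \<times> 'a \<Rightarrow> 'a \<times> 'a) \<Rightarrow> bool" where
  "frac_endo f \<longleftrightarrow> (\<forall>p q. p \<simeq> q \<longrightarrow> f p \<simeq> f q) \<and>
     (\<forall>p q. fst p \<in> S \<longrightarrow> fst q \<in> S \<longrightarrow> f (p \<oplus> q) \<simeq> f p \<oplus> f q)"

lemma frac_endoI:
  "(\<And>p q. p \<simeq> q \<Longrightarrow> f p \<simeq> f q) \<Longrightarrow>
   (\<And>p q. fst p \<in> S \<Longrightarrow> fst q \<in> S \<Longrightarrow> f (p \<oplus> q) \<simeq> f p \<oplus> f q) \<Longrightarrow> frac_endo f"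
  unfolding frac_endo_def by blast

lemma frac_endo_cong: "frac_endo f \<Longrightarrow> p \<simeq> q \<Longrightarrow> f p \<simeq> f q"
  and frac_endo_additive: "frac_endo f \<Longrightarrow> fst p \<in> S \<Longrightarrow> fst q \<in> S \<Longrightarrow> f (p \<oplus> q) \<simeq> f p \<oplus> f q"
  unfolding frac_endo_def by blast+

lemma frac_endo_in_S: "frac_endo f \<Longrightarrow> fst p \<in> S \<Longrightarrow> fst (f p) \<in> S"
  using frac_endo_cong[of f p p] by (simp add: frac_eq_refl_iff)

lemma frac_endo_act: "frac_endo (frac_act r)"
  by (intro frac_endoI frac_act_cong frac_act_additive)

lemma frac_endo_div: "s \<in> S \<Longrightarrow> frac_endo (frac_div s)"
  by (intro frac_endoI frac_div_cong frac_div_additive)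

lemma frac_endo_zero: "frac_endo (\<lambda>_. frac_zero)"
  by (intro frac_endoI frac_eq_sym[OF frac_zero_add]) (simp_all add: frac_zero_def one_in_S frac_eq_refl)

lemma frac_endo_id: "frac_endo id"
  by (intro frac_endoI) (simp_all add: frac_eq_refl_iff frac_add_in_S)

lemma frac_endo_neg: "frac_endo f \<Longrightarrow> frac_endo (frac_neg \<circ> f)"
  by (intro frac_endoI) (simp_all add: frac_endo_cong frac_endo_additive frac_neg_cong flip: frac_neg_distrib)

lemma frac_endo_plus:
  assumes f: "frac_endo f" and g: "frac_endo g" shows "frac_endo (\<lambda>p. f p \<oplus> g p)"
proof (rule frac_endoI)
  show "f p \<oplus> g p \<simeq> f q \<oplus> g q" if "p \<simeq> q" for p q
    using that by (intro frac_add_cong frac_endo_cong[OF f] frac_endo_cong[OF g])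
next
  fix p q :: "'a \<times> 'a" assume S: "fst p \<in> S" "fst q \<in> S"
  have "f (p \<oplus> q) \<oplus> g (p \<oplus> q) \<simeq> (f p \<oplus> f q) \<oplus> (g p \<oplus> g q)"
    using S by (intro frac_add_cong frac_endo_additive[OF f] frac_endo_additive[OF g])
  also have "\<dots> \<simeq> (f p \<oplus> g p) \<oplus> (f q \<oplus> g q)"
    using S by (intro frac_add_interchange frac_endo_in_S[OF f] frac_endo_in_S[OF g])
  finally show "f (p \<oplus> q) \<oplus> g (p \<oplus> q) \<simeq> (f p \<oplus> g p) \<oplus> (f q \<oplus> g q)" .
qed

lemma frac_endo_comp:
  assumes f: "frac_endo f" and g: "frac_endo g" shows "frac_endo (f \<circ> g)"
proof (rule frac_endoI)
  show "(f \<circ> g) p \<simeq> (f \<circ> g) q" if "p \<simeq> q" for p q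
    using that by (simp add: frac_endo_cong[OF f] frac_endo_cong[OF g])
next
  fix p q :: "'a \<times> 'a" assume S: "fst p \<in> S" "fst q \<in> S"
  have "f (g (p \<oplus> q)) \<simeq> f (g p \<oplus> g q)" by (rule frac_endo_cong[OF f frac_endo_additive[OF g S]])
  also have "\<dots> \<simeq> f (g p) \<oplus> f (g q)" using S by (intro frac_endo_additive[OF f] frac_endo_in_S[OF g])
  finally show "(f \<circ> g) (p \<oplus> q) \<simeq> (f \<circ> g) p \<oplus> (f \<circ> g) q" by simp
qed

text \<open>Generators x_a with a not in S are zero in R<S^-1>, so they act as zero.\<close>

primrec frac_op :: "'a rexp \<Rightarrow> 'a \<times> 'a \<Rightarrow> 'a \<times> 'a" where
  "frac_op (Emb r) = frac_act r"
| "frac_op (Xg a) = (if a \<in> S then frac_div a else (\<lambda>_. frac_zero))"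
| "frac_op Zr = (\<lambda>_. frac_zero)"
| "frac_op On = id"
| "frac_op (Ad t u) = (\<lambda>p. frac_op t p \<oplus> frac_op u p)"
| "frac_op (Ng t) = frac_neg \<circ> frac_op t"
| "frac_op (Ml t u) = frac_op t \<circ> frac_op u"

lemma frac_endo_frac_op: "frac_endo (frac_op t)"
proof (induction t)
  case (Xg a) then show ?case by (simp add: frac_endo_div frac_endo_zero)
qed (simp_all only: frac_op.simps frac_endo_act frac_endo_zero frac_endo_id frac_endo_neg
      frac_endo_plus frac_endo_comp)

lemma frac_op_in_S: "fst p \<in> S \<Longrightarrow> fst (frac_op t p) \<in> S"
  by (rule frac_endo_in_S[OF frac_endo_frac_op])

lemma frac_op_sound: "loc_eq S t u \<Longrightarrow> fst p \<in> S \<Longrightarrow> frac_op t p \<simeq> frac_op u p"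
proof (induction arbitrary: p rule: loc_eq.induct)
  case (refl t) then show ?case by (simp add: frac_eq_refl_iff frac_op_in_S)
next
  case (sym t u) then show ?case by (blast intro: frac_eq_sym)
next
  case (trans t u v) then show ?case by (blast intro: frac_eq_trans)
next
  case (cong_add t t' u u') then show ?case by (simp add: frac_add_cong)
next
  case (cong_neg t t') then show ?case by (simp add: frac_neg_cong)
next
  case (cong_mul t t' u u')
  then have "frac_op t (frac_op u p) \<simeq> frac_op t (frac_op u' p)"
    by (intro frac_endo_cong[OF frac_endo_frac_op])
  also have "\<dots> \<simeq> frac_op t' (frac_op u' p)" by (intro cong_mul.IH frac_op_in_S cong_mul.prems)
  finally show ?case by simp
next
  case (add_assoc t u v) then show ?case by (simp add: frac_add_assoc frac_op_in_S)
next
  case (add_comm t u) then show ?case by (simp add: frac_add_commute frac_op_in_S)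
next
  case (add_zero t) then show ?case by (simp add: frac_zero_add frac_op_in_S)
next
  case (add_neg t) then show ?case by (simp add: frac_neg_add frac_op_in_S)
next
  case (distr_l t u v)
  then show ?case by (simp add: frac_endo_additive[OF frac_endo_frac_op] frac_op_in_S)
next
  case (distr_r t u v)
  then show ?case by (simp add: frac_eq_refl_iff frac_add_in_S frac_op_in_S)
next
  case (emb_add a b) then show ?case by (simp add: frac_act_add)
next
  case (emb_mul a b) then show ?case by (simp add: frac_act_mult)
next
  case emb_one then show ?case by (simp add: frac_act_one)
next
  case (inv_r s) then show ?case by (simp add: frac_act_div)
next
  case (inv_l s) then show ?case by (simp add: frac_div_act)
qed (simp_all add: frac_eq_refl_iff frac_zero_def one_in_S frac_op_in_S)

lemma frac_one_eq_zero:
  assumes "(1, x) \<simeq> frac_zero" shows "x \<in> c"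
proof -
  obtain a a' t where t: "t \<in> S" and "a * 1 \<sim> t" and ax: "a * x \<sim> a' * 0"
    using assms unfolding frac_zero_def by (rule frac_eqE)
  then have "t * x \<sim> a * x" by (simp add: cong_mult_right cong_sym)
  also have "\<dots> \<sim> 0" using ax by simp
  finally show ?thesis by (rule cong_zero_cancel_left[OF t])
qed

lemma frac_act_one_one: "frac_act r (1, 1) \<simeq> (1, r)"
  using frac_act_eq[OF one_in_S one_in_S, of r r 1] by simp

theorem loc_eq_nontrivial: "\<not> loc_eq S On Zr"
proof
  assume "loc_eq S On Zr"
  then have "(1, 1) \<simeq> frac_zero" using frac_op_sound[of On Zr "(1, 1)"] by (simp add: one_in_S)
  then have "1 \<in> c" by (rule frac_one_eq_zero)
  then show False using left_ore one_in_S by (auto simp: left_ore_mod_def)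
qed

theorem ass_subset: "ass S \<subseteq> c"
proof
  fix r assume "r \<in> ass S"
  then have "frac_act r (1, 1) \<simeq> frac_zero"
    using frac_op_sound[of "Emb r" Zr "(1, 1)"] by (simp add: ass_def one_in_S)
  then have "(1, r) \<simeq> frac_zero" by (rule frac_eq_trans[OF frac_eq_sym[OF frac_act_one_one]])
  then show "r \<in> c" by (rule frac_one_eq_zero)
qed

end

section \<open>The opposite ring\<close>

datatype 'a opp = Opp (unOpp: 'a)

instantiation opp :: (ring_1) ring_1
begin
definition "0 = Opp 0"
definition "1 = Opp 1"
definition "x + y = Opp (unOpp x + unOpp y)"
definition "x - y = Opp (unOpp x - unOpp y)"
definition "- x = Opp (- unOpp x)"
definition "x * y = Opp (unOpp y * unOpp x)"
instance
  by standard (simp_all add: zero_opp_def one_opp_def plus_opp_def minus_opp_def uminus_opp_def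
      times_opp_def opp.expand algebra_simps)
end

lemma Opp_simps [simp]:
  "Opp a + Opp b = Opp (a + b)" "Opp a - Opp b = Opp (a - b)" "- Opp a = Opp (- a)"
  "Opp a * Opp b = Opp (b * a)" "Opp 0 = 0" "Opp 1 = 1"
  by (simp_all add: zero_opp_def one_opp_def plus_opp_def minus_opp_def uminus_opp_def times_opp_def)

lemma unOpp_simps [simp]:
  "unOpp (x + y) = unOpp x + unOpp y" "unOpp (x * y) = unOpp y * unOpp x"
  "unOpp 0 = 0" "unOpp 1 = 1"
  by (simp_all add: zero_opp_def one_opp_def plus_opp_def times_opp_def del: Opp_simps)

lemma bij_Opp: "bij Opp"
  by (intro bijI injI surjI[of Opp unOpp]) simp_all

lemma all_opp: "(\<forall>x :: 'a opp. P x) \<longleftrightarrow> (\<forall>a. P (Opp a))"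
  and ex_opp: "(\<exists>x :: 'a opp. P x) \<longleftrightarrow> (\<exists>a. P (Opp a))"
  by (metis opp.collapse)+

lemma all_opp_set: "(\<forall>B :: 'a opp set. P B) \<longleftrightarrow> (\<forall>A. P (Opp ` A))"
  using surj_image_vimage_eq[OF bij_is_surj[OF bij_Opp]] by metis

lemma mem_Opp_image [simp]: "x \<in> Opp ` A \<longleftrightarrow> unOpp x \<in> A"
  by (cases x) (simp add: bij_Opp bij_is_inj inj_image_mem_iff)

lemma Opp_image_eq_iff [simp]: "Opp ` A = Opp ` B \<longleftrightarrow> A = B"
  by (simp add: bij_Opp bij_is_inj inj_image_eq_iff)

lemma ball_Opp_image: "(\<forall>x\<in>Opp ` A. P x) \<longleftrightarrow> (\<forall>a\<in>A. P (Opp a))"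
  and bex_Opp_image: "(\<exists>x\<in>Opp ` A. P x) \<longleftrightarrow> (\<exists>a\<in>A. P (Opp a))"
  by (simp_all add: Ball_def Bex_def all_opp ex_opp)

lemma inj_unOpp: "inj unOpp"
  by (rule injI) (simp add: opp.expand)

primrec rev_term :: "('a \<Rightarrow> 'b) \<Rightarrow> 'a rexp \<Rightarrow> 'b rexp" where
  "rev_term f (Emb a) = Emb (f a)"
| "rev_term f (Xg a) = Xg (f a)"
| "rev_term f Zr = Zr"
| "rev_term f On = On"
| "rev_term f (Ad t u) = Ad (rev_term f t) (rev_term f u)"
| "rev_term f (Ng t) = Ng (rev_term f t)"
| "rev_term f (Ml t u) = Ml (rev_term f u) (rev_term f t)"

lemma loc_eq_rev_term:
  fixes f :: "'a::ring_1 \<Rightarrow> 'b::ring_1"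
  assumes inj: "inj f" and add: "\<And>a b. f (a + b) = f a + f b"
    and mult: "\<And>a b. f (a * b) = f b * f a" and one: "f 1 = 1"
  shows "loc_eq S t u \<Longrightarrow> loc_eq (f ` S) (rev_term f t) (rev_term f u)"
proof (induction rule: loc_eq.induct)
  case (mul_assoc t u v) show ?case by (simp add: loc_eq.sym loc_eq.mul_assoc)
next
  case (emb_add a b) show ?case by (simp add: add loc_eq.emb_add)
next
  case (emb_mul a b) show ?case by (simp add: mult loc_eq.emb_mul)
next
  case emb_one show ?case by (simp add: one loc_eq.emb_one)
next
  case (kill a) then show ?case by (simp add: inj inj_image_mem_iff loc_eq.kill)
qed (auto intro: loc_eq.intros)

lemma rev_term_unOpp_Opp [simp]: "rev_term unOpp (rev_term Opp t) = t"
  by (induction t) simp_all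

lemma rev_term_Opp_unOpp [simp]: "rev_term Opp (rev_term unOpp t) = t"
  by (induction t) simp_all

lemma all_rev_term_Opp: "(\<forall>t :: 'a opp rexp. P t) \<longleftrightarrow> (\<forall>t. P (rev_term Opp t))"
  by (metis rev_term_Opp_unOpp)

lemma loc_eq_Opp_iff:
  "loc_eq (Opp ` S) (rev_term Opp t) (rev_term Opp u) \<longleftrightarrow> loc_eq (S :: 'a::ring_1 set) t u"
proof
  assume "loc_eq (Opp ` S) (rev_term Opp t) (rev_term Opp u)"
  from loc_eq_rev_term[OF inj_unOpp _ _ _ this] show "loc_eq S t u" by (simp add: image_image)
next
  assume "loc_eq S t u"
  from loc_eq_rev_term[OF bij_is_inj[OF bij_Opp] _ _ _ this]
  show "loc_eq (Opp ` S) (rev_term Opp t) (rev_term Opp u)" by simp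
qed

lemma mem_Inter_Opp_image: "x \<in> \<Inter>{B. P B} \<longleftrightarrow> (\<forall>b. P (Opp ` b) \<longrightarrow> unOpp x \<in> b)"
  using all_opp_set[where P = "\<lambda>B. P B \<longrightarrow> x \<in> B"] by simp

lemma mult_set_Opp_image: "mult_set (Opp ` S) \<longleftrightarrow> mult_set (S :: 'a::ring_1 set)"
  unfolding mult_set_def by (auto simp: ball_Opp_image)

lemma ideal_Opp_image: "ideal (Opp ` b) \<longleftrightarrow> ideal (b :: 'a::ring_1 set)"
  unfolding ideal_def by (simp add: ball_Opp_image all_opp conj_commute)

lemma lreg_mod_Opp_image: "lreg_mod (Opp ` b) (Opp s) \<longleftrightarrow> rreg_mod (b :: 'a::ring_1 set) s"
  and rreg_mod_Opp_image: "rreg_mod (Opp ` b) (Opp s) \<longleftrightarrow> lreg_mod b s"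
  unfolding lreg_mod_def rreg_mod_def by (simp_all add: all_opp)

lemma la_ideal_Opp_image: "la_ideal (Opp ` S) = Opp ` ra_ideal (S :: 'a::ring_1 set)"
proof -
  have "x \<in> la_ideal (Opp ` S) \<longleftrightarrow> (\<forall>b. ideal b \<and> (\<forall>s\<in>S. rreg_mod b s) \<longrightarrow> unOpp x \<in> b)" for x
    unfolding la_ideal_def
    by (simp only: mem_Inter_Opp_image ideal_Opp_image ball_Opp_image lreg_mod_Opp_image)
  then show ?thesis by (auto simp: ra_ideal_def)
qed

lemma a_ideal_Opp_image: "a_ideal (Opp ` S) = Opp ` a_ideal (S :: 'a::ring_1 set)"
proof -
  have "x \<in> a_ideal (Opp ` S) \<longleftrightarrow>
      (\<forall>b. ideal b \<and> (\<forall>s\<in>S. rreg_mod b s \<and> lreg_mod b s) \<longrightarrow> unOpp x \<in> b)" for x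
    unfolding a_ideal_def
    by (simp only: mem_Inter_Opp_image ideal_Opp_image ball_Opp_image lreg_mod_Opp_image
        rreg_mod_Opp_image)
  moreover have "y \<in> a_ideal S \<longleftrightarrow>
      (\<forall>b. ideal b \<and> (\<forall>s\<in>S. rreg_mod b s \<and> lreg_mod b s) \<longrightarrow> y \<in> b)" for y
    unfolding a_ideal_def by blast
  ultimately show ?thesis by (intro set_eqI) simp
qed

lemma left_ore_mod_Opp_image:
  "left_ore_mod (Opp ` b) (Opp ` S) \<longleftrightarrow> right_ore_mod b (S :: 'a::ring_1 set)"
  unfolding left_ore_mod_def right_ore_mod_def by (simp add: all_opp ex_opp ball_Opp_image bex_Opp_image)

lemma Ore_l_Opp_image: "Opp ` S \<in> Ore_l \<longleftrightarrow> (S :: 'a::ring_1 set) \<in> Ore_r"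
  and Ore_r_Opp_image: "Opp ` S \<in> Ore_r \<longleftrightarrow> S \<in> Ore_l"
  unfolding Ore_l_def Ore_r_def
  by (simp_all add: mult_set_Opp_image all_opp ex_opp ball_Opp_image bex_Opp_image)

lemma ass_Opp_image: "ass (Opp ` S) = Opp ` ass (S :: 'a::ring_1 set)"
proof -
  have "loc_eq (Opp ` S) (Emb x) Zr \<longleftrightarrow> loc_eq S (Emb (unOpp x)) Zr" for x
    using loc_eq_Opp_iff[of S "Emb (unOpp x)" Zr] by simp
  then show ?thesis by (intro set_eqI) (simp add: ass_def)
qed

lemma left_localizable_Opp_image:
  "left_localizable (Opp ` S) \<longleftrightarrow> right_localizable (S :: 'a::ring_1 set)"
proof -
  have "Ml (Xg (Opp s)) (Emb (Opp r)) = rev_term Opp (Ml (Emb r) (Xg s))" for s r :: 'a by simp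
  moreover have "loc_eq (Opp ` S) On Zr \<longleftrightarrow> loc_eq S On Zr"
    using loc_eq_Opp_iff[of S On Zr] by simp
  ultimately show ?thesis
    unfolding left_localizable_def right_localizable_def
    by (simp only: mult_set_Opp_image all_rev_term_Opp bex_Opp_image ex_opp loc_eq_Opp_iff)
qed

definition left_torsion :: "'a::ring_1 set \<Rightarrow> 'a set \<Rightarrow> 'a set" where
  "left_torsion b S = {x. \<exists>s\<in>S. s * x \<in> b}"

lemma left_torsionI: "s \<in> S \<Longrightarrow> s * x \<in> b \<Longrightarrow> x \<in> left_torsion b S"
  unfolding left_torsion_def by blast

lemma left_torsionE:
  assumes "x \<in> left_torsion b S" obtains s where "s \<in> S" "s * x \<in> b"
  using assms unfolding left_torsion_def by blast

lemma ideal_left_torsion: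
  assumes b: "ideal b" and S: "mult_set S" and Ore: "left_ore_mod b S"
  shows "ideal (left_torsion b S)"
  unfolding ideal_def
proof (intro conjI ballI allI)
  have one: "1 \<in> S" and mult: "\<And>a a'. a \<in> S \<Longrightarrow> a' \<in> S \<Longrightarrow> a * a' \<in> S"
    using S by (auto simp: mult_set_def)
  have Ore': "\<exists>s'\<in>S. \<exists>r'. s' * r - r' * s \<in> b" if "s \<in> S" for r s
    using Ore that by (auto simp: left_ore_mod_def)
  show "0 \<in> left_torsion b S" using left_torsionI[OF one] ideal_zero[OF b] by simp
  fix x assume "x \<in> left_torsion b S"
  then obtain s where s: "s \<in> S" and sx: "s * x \<in> b" by (rule left_torsionE)
  show "- x \<in> left_torsion b S" using left_torsionI[OF s] ideal_uminus[OF b sx] by simp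
  fix r
  show "x * r \<in> left_torsion b S"
    using left_torsionI[OF s] ideal_mult_right[OF b sx, of r] by (simp add: mult.assoc)
  obtain t r' where t: "t \<in> S" and tr: "t * r - r' * s \<in> b" using Ore'[OF s] by blast
  have "t * (r * x) = (t * r - r' * s) * x + r' * (s * x)" by (simp add: algebra_simps)
  also have "\<dots> \<in> b" by (intro ideal_add[OF b] ideal_mult_left[OF b] ideal_mult_right[OF b] tr sx)
  finally show "r * x \<in> left_torsion b S" by (rule left_torsionI[OF t])
  fix y assume "y \<in> left_torsion b S"
  then obtain s' where s': "s' \<in> S" and sy: "s' * y \<in> b" by (rule left_torsionE)
  obtain u v where u: "u \<in> S" and uv: "u * s - v * s' \<in> b" using Ore'[OF s'] by blast
  have "(u * s) * (x + y) = u * (s * x) + ((u * s - v * s') * y + v * (s' * y))"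
    by (simp add: algebra_simps)
  also have "\<dots> \<in> b" by (intro ideal_add[OF b] ideal_mult_left[OF b] ideal_mult_right[OF b] uv sx sy)
  finally show "x + y \<in> left_torsion b S" by (rule left_torsionI[OF mult[OF u s]])
qed

lemma subset_left_torsion: "mult_set S \<Longrightarrow> b \<subseteq> left_torsion b S"
  using left_torsionI[of 1 S] by (auto simp: mult_set_def)

lemma regular_left_ore_mod_left_torsion:
  assumes b: "ideal b" and S: "mult_set S" and Ore: "left_ore_mod b S"
    and lreg: "\<And>s. s \<in> S \<Longrightarrow> lreg_mod b s"
  shows "regular_left_ore_mod S (left_torsion b S)"
proof
  have mult: "\<And>a a'. a \<in> S \<Longrightarrow> a' \<in> S \<Longrightarrow> a * a' \<in> S" using S by (auto simp: mult_set_def)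
  show "ideal (left_torsion b S)" by (rule ideal_left_torsion[OF b S Ore])
  show "mult_set S" by (rule S)
  fix s assume s: "s \<in> S"
  show "lreg_mod (left_torsion b S) s \<and> rreg_mod (left_torsion b S) s"
    unfolding lreg_mod_def rreg_mod_def
  proof (intro conjI allI impI)
    fix x assume "x * s \<in> left_torsion b S"
    then obtain t where t: "t \<in> S" and "(t * x) * s \<in> b" by (auto elim: left_torsionE simp: mult.assoc)
    then have "t * x \<in> b" using lreg[OF s] by (simp add: lreg_mod_def)
    then show "x \<in> left_torsion b S" by (rule left_torsionI[OF t])
  next
    fix x assume "s * x \<in> left_torsion b S"
    then obtain t where t: "t \<in> S" and "(t * s) * x \<in> b" by (auto elim: left_torsionE simp: mult.assoc)
    then show "x \<in> left_torsion b S" by (intro left_torsionI[OF mult[OF t s]])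
  qed
next
  have mult: "\<And>a a'. a \<in> S \<Longrightarrow> a' \<in> S \<Longrightarrow> a * a' \<in> S" using S by (auto simp: mult_set_def)
  have "s \<notin> left_torsion b S" if "s \<in> S" for s
    using Ore mult[OF _ that] by (auto elim: left_torsionE simp: left_ore_mod_def)
  then show "left_ore_mod (left_torsion b S) S"
    using Ore subset_left_torsion[OF S] unfolding left_ore_mod_def by blast
qed

lemma left_ore_mod_if_Ore_l:
  assumes S: "S \<in> Ore_l" and b: "ideal b" and disjoint: "\<And>s. s \<in> S \<Longrightarrow> s \<notin> b"
  shows "left_ore_mod b S"
  unfolding left_ore_mod_def
proof (intro conjI ballI allI disjoint)
  fix r s assume s: "s \<in> S"
  have "\<forall>r. \<forall>s\<in>S. \<exists>s'\<in>S. \<exists>r'. s' * r = r' * s" using S by (simp add: Ore_l_def)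
  then obtain s' r' where "s' \<in> S" "s' * r = r' * s" using s by (elim allE ballE bexE exE) auto
  then show "\<exists>s'\<in>S. \<exists>r'. s' * r - r' * s \<in> b" using ideal_zero[OF b] by (metis diff_self)
qed

lemma right_ore_mod_if_Ore_r:
  assumes "S \<in> Ore_r" and "ideal b" and "\<And>s. s \<in> S \<Longrightarrow> s \<notin> b"
  shows "right_ore_mod b (S :: 'a::ring_1 set)"
  using left_ore_mod_if_Ore_l[of "Opp ` S" "Opp ` b"] assms
  by (simp add: Ore_l_Opp_image ideal_Opp_image left_ore_mod_Opp_image)

theorem lL_l_subset_Lpl: "lL_l \<subseteq> Lpl"
proof
  fix S :: "'a set" assume "S \<in> lL_l"
  then have S: "mult_set S" and Ore: "left_ore_mod (la_ideal S) S" by (auto simp: lL_l_def)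
  let ?T = "left_torsion (la_ideal S) S"
  interpret regular_left_ore_mod S ?T
    using ideal_la_ideal S Ore lreg_mod_la_ideal by (rule regular_left_ore_mod_left_torsion)
  have "?T \<subseteq> a_ideal S"
  proof
    fix x assume "x \<in> ?T"
    then obtain s where s: "s \<in> S" and "s * x \<in> la_ideal S" by (rule left_torsionE)
    then have "s * x \<in> a_ideal S" using la_ideal_subset_a_ideal by blast
    then show "x \<in> a_ideal S" using rreg_mod_a_ideal[OF s] by (simp add: rreg_mod_def)
  qed
  then have ass_eq: "ass S = a_ideal S" using ass_subset a_ideal_subset_ass by blast
  have "la_ideal S \<subseteq> ass S" using la_ideal_subset_a_ideal ass_eq by simp
  then have "\<exists>s'\<in>S. \<exists>r'. s' * r - r' * s \<in> ass S" if "s \<in> S" for r s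
    using Ore that unfolding left_ore_mod_def by blast
  then have "left_localizable S"
    using S loc_eq_nontrivial left_ore_has_left_fraction[OF S]
    unfolding left_localizable_def has_left_fraction_def by blast
  then show "S \<in> Lpl" by (simp add: Lpl_def Ll_def ass_eq)
qed

theorem LOre_l_subset_lL_l: "LOre_l \<subseteq> lL_l"
proof
  fix S :: "'a set" assume "S \<in> LOre_l"
  then have "left_localizable S" and Ore: "S \<in> Ore_l" by (simp_all add: LOre_l_def Ll_def)
  then have S: "mult_set S" and nontrivial: "\<not> loc_eq S On Zr" unfolding left_localizable_def by blast+
  have "la_ideal S \<subseteq> ass S" using la_ideal_subset_a_ideal a_ideal_subset_ass by blast
  then have "s \<notin> la_ideal S" if "s \<in> S" for s using not_in_ass[OF nontrivial that] by blast
  then have "left_ore_mod (la_ideal S) S" by (rule left_ore_mod_if_Ore_l[OF Ore ideal_la_ideal])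
  then show "S \<in> lL_l" using S by (simp add: lL_l_def)
qed

definition right_torsion :: "'a::ring_1 set \<Rightarrow> 'a set \<Rightarrow> 'a set" where
  "right_torsion b S = {x. \<exists>s\<in>S. x * s \<in> b}"

lemma left_torsion_Opp_image:
  "left_torsion (Opp ` b) (Opp ` S) = Opp ` right_torsion b (S :: 'a::ring_1 set)"
  by (intro set_eqI) (simp add: left_torsion_def right_torsion_def bex_Opp_image)

lemma ideal_right_torsion:
  "ideal b \<Longrightarrow> mult_set S \<Longrightarrow> right_ore_mod b S \<Longrightarrow> ideal (right_torsion b (S :: 'a::ring_1 set))"
  using ideal_left_torsion[of "Opp ` b" "Opp ` S"]
  by (simp add: ideal_Opp_image mult_set_Opp_image left_ore_mod_Opp_image left_torsion_Opp_image)

theorem Ore_subset_lL_l: "Ore \<subseteq> lL_l"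
proof
  fix S :: "'a set" assume "S \<in> Ore"
  then have S: "mult_set S" and Ore_l: "S \<in> Ore_l" and Ore_r: "S \<in> Ore_r"
    by (simp_all add: Ore_def Ore_r_def)
  have zero: "0 \<notin> S" and mult: "\<And>a a'. a \<in> S \<Longrightarrow> a' \<in> S \<Longrightarrow> a * a' \<in> S"
    using S by (auto simp: mult_set_def)
  let ?T = "right_torsion {0} S"
  have "ideal ?T"
    using S Ore_r zero by (intro ideal_right_torsion ideal_zero_set right_ore_mod_if_Ore_r) auto
  moreover have "lreg_mod ?T s" if s: "s \<in> S" for s
    unfolding lreg_mod_def right_torsion_def using mult[OF s] by (auto simp: mult.assoc)
  ultimately have la_T: "la_ideal S \<subseteq> ?T" by (rule la_ideal_least)
  have "s \<notin> la_ideal S" if s: "s \<in> S" for s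
  proof
    assume "s \<in> la_ideal S"
    then obtain t where "t \<in> S" "s * t = 0" using la_T by (auto simp: right_torsion_def)
    then show False using mult[OF s] zero by metis
  qed
  then show "S \<in> lL_l"
    using S Ore_l by (simp add: lL_l_def left_ore_mod_if_Ore_l ideal_la_ideal)
qed

lemma lL_l_Opp_image: "Opp ` S \<in> lL_l \<longleftrightarrow> (S :: 'a::ring_1 set) \<in> rL_r"
  unfolding lL_l_def rL_r_def by (simp add: mult_set_Opp_image la_ideal_Opp_image left_ore_mod_Opp_image)

lemma Lpl_Opp_image: "Opp ` S \<in> Lpl \<longleftrightarrow> (S :: 'a::ring_1 set) \<in> Lpr"
  unfolding Lpl_def Lpr_def Ll_def Lr_def
  by (simp add: left_localizable_Opp_image ass_Opp_image a_ideal_Opp_image)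

lemma LOre_l_Opp_image: "Opp ` S \<in> LOre_l \<longleftrightarrow> (S :: 'a::ring_1 set) \<in> LOre_r"
  unfolding LOre_l_def LOre_r_def Ll_def Lr_def by (simp add: left_localizable_Opp_image Ore_l_Opp_image)

lemma Ore_Opp_image: "Opp ` S \<in> Ore \<longleftrightarrow> (S :: 'a::ring_1 set) \<in> Ore"
  unfolding Ore_def by (auto simp: Ore_l_Opp_image Ore_r_Opp_image)

lemma subset_via_Opp:
  assumes "A \<subseteq> B" and "\<And>S. Opp ` S \<in> A \<longleftrightarrow> S \<in> A'" and "\<And>S. Opp ` S \<in> B \<longleftrightarrow> S \<in> B'"
  shows "A' \<subseteq> B'"
  using assms by blast

theorem rL_r_subset_Lpr: "rL_r \<subseteq> Lpr"
  by (rule subset_via_Opp[OF lL_l_subset_Lpl lL_l_Opp_image Lpl_Opp_image])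

theorem LOre_r_subset_rL_r: "LOre_r \<subseteq> rL_r"
  by (rule subset_via_Opp[OF LOre_l_subset_lL_l LOre_l_Opp_image lL_l_Opp_image])

theorem Ore_subset_rL_r: "Ore \<subseteq> rL_r"
  by (rule subset_via_Opp[OF Ore_subset_lL_l Ore_Opp_image lL_l_Opp_image])

lemma Lpl_subset_Ll: "Lpl \<subseteq> Ll" and Lpr_subset_Lr: "Lpr \<subseteq> Lr"
  by (auto simp: Lpl_def Lpr_def)

lemma Lp_eq_Lpl_Int_Lpr: "Lp = Lpl \<inter> Lpr"
  by (auto simp: Lp_def Lpl_def Lpr_def L_def)

theorem proposition1p4:
  shows "(LOre_l \<subseteq> (lL_l :: 'a::ring_1 set set) \<and> lL_l \<subseteq> (Lpl :: 'a set set) \<and>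
          LOre_l = (lL_l \<inter> Ore_l :: 'a set set) \<and> lL_l \<inter> Ore_l = (Lpl \<inter> Ore_l :: 'a set set))
       \<and> (LOre_r \<subseteq> (rL_r :: 'a set set) \<and> rL_r \<subseteq> (Lpr :: 'a set set) \<and>
          LOre_r = (rL_r \<inter> Ore_r :: 'a set set) \<and> rL_r \<inter> Ore_r = (Lpr \<inter> Ore_r :: 'a set set))
       \<and> ((Ore :: 'a set set) \<subseteq> lrL_lr \<and> (lrL_lr :: 'a set set) \<subseteq> Lp)"
proof -
  note left = LOre_l_subset_lL_l lL_l_subset_Lpl Lpl_subset_Ll
  note right = LOre_r_subset_rL_r rL_r_subset_Lpr Lpr_subset_Lr
  have "LOre_l = lL_l \<inter> Ore_l" "lL_l \<inter> Ore_l = Lpl \<inter> Ore_l"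
    using left unfolding LOre_l_def by blast+
  moreover have "LOre_r = rL_r \<inter> Ore_r" "rL_r \<inter> Ore_r = Lpr \<inter> Ore_r"
    using right unfolding LOre_r_def by blast+
  moreover have "Ore \<subseteq> lrL_lr" "lrL_lr \<subseteq> Lp"
    using Ore_subset_lL_l Ore_subset_rL_r lL_l_subset_Lpl rL_r_subset_Lpr
    unfolding lrL_lr_def Lp_eq_Lpl_Int_Lpr by blast+
  ultimately show ?thesis using left right by blast
qed

end
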